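(* Let $X=\mathbb{Q}$ with its usual ordering, let $\Gamma$ be the group of all order-preserving permutations of $\mathbb{Q}$ acting by application, and let $I$ be the ideal of nowhere dense subsets of $\mathbb{Q}$ (in the order topology). Then the dynamical ideal $\Gamma\curvearrowright X, I$ has cofinal orbits.
   Context: For a group $\Gamma$ acting on $X$ and a $\Gamma$-invariant ideal $I$ on $X$ containing all singletons, and $a\subseteq X$, $\mathrm{pstab}(a)=\{\gamma\in\Gamma:\gamma\cdot x=x\ \forall x\in a\}$. For $a,b\in I$, $b$ is $a$-large if for every $c\in I$ there is $\gamma\in\mathrm{pstab}(a)$ with $c\subseteq\gamma\cdot b$, where $\gamma\cdot b=\{\gamma\cdot x:x\in b\}$. The dynamical ideal has cofinal orbits if for every $a\in I$ there is an $a$-large $b\in I$. *)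

theory Defs
  imports "HOL-Analysis.Analysis"
begin

text \<open>The order topology on the rationals (the library provides no topology on rat).\<close>
instantiation rat :: linorder_topology
begin
definition open_rat_def:
  "open (S :: rat set) = generate_topology (range lessThan \<union> range greaterThan) S"
instance by standard (simp add: open_rat_def fun_eq_iff)
end

definition pstab :: "('x \<Rightarrow> 'x) set \<Rightarrow> 'x set \<Rightarrow> ('x \<Rightarrow> 'x) set" where
  "pstab \<Gamma> a = {\<gamma> \<in> \<Gamma>. \<forall>x \<in> a. \<gamma> x = x}"

definition is_large :: "('x \<Rightarrow> 'x) set \<Rightarrow> 'x set set \<Rightarrow> 'x set \<Rightarrow> 'x set \<Rightarrow> bool" where
  "is_large \<Gamma> I a b \<longleftrightarrow> (\<forall>c \<in> I. \<exists>\<gamma> \<in> pstab \<Gamma> a. c \<subseteq> \<gamma> ` b)"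

definition has_cofinal_orbits :: "('x \<Rightarrow> 'x) set \<Rightarrow> 'x set set \<Rightarrow> bool" where
  "has_cofinal_orbits \<Gamma> I \<longleftrightarrow> (\<forall>a \<in> I. \<exists>b \<in> I. is_large \<Gamma> I a b)"

definition nowhere_dense :: "'a::topological_space set \<Rightarrow> bool" where
  "nowhere_dense A \<longleftrightarrow> interior (closure A) = {}"

definition order_automorphisms_rat :: "(rat \<Rightarrow> rat) set" where
  "order_automorphisms_rat = {f. bij f \<and> (\<forall>x y. x \<le> y \<longleftrightarrow> f x \<le> f y)}"

end

theory Submission
  imports Defs
begin

text \<open>Let \<open>F\<close> be the closure of the given nowhere dense set. Each point outside \<open>F\<close> lies in a
  maximal dyadic interval missing \<open>F\<close>; putting a scaled copy of a nowhere dense set without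
  one-sided isolated points into each of these intervals gives a nowhere dense \<open>B \<supseteq> F\<close> that
  accumulates from both sides at each of its points and has points on both sides of every point
  of every gap of \<open>F\<close>. Given a closed nowhere dense \<open>C\<close>, a back-and-forth construction over
  finite partial isomorphisms fixing \<open>F\<close> produces an order automorphism fixing \<open>F\<close> that pulls
  \<open>C\<close> back into \<open>B\<close>. The invariant that makes every step possible is that \<open>B\<close>-free gaps
  between arguments are mapped onto \<open>C\<close>-free gaps.\<close>

section \<open>Nowhere dense sets of rationals\<close>

lemma open_rat_contains_interval:
  assumes "open S" "(x::rat) \<in> S"
  obtains e where "e > 0" "{x - e<..<x + e} \<subseteq> S"
proof -
  obtain b where b: "x < b" "{x..<b} \<subseteq> S" using open_right[OF assms, of "x + 1"] by auto
  obtain a where a: "a < x" "{a<..x} \<subseteq> S" using open_left[OF assms, of "x - 1"] by auto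
  have "{x - min (b - x) (x - a)<..<x + min (b - x) (x - a)} \<subseteq> {a<..x} \<union> {x..<b}"
    by auto
  with a b show ?thesis using that[of "min (b - x) (x - a)"] by auto
qed

lemma closed_rat_avoids_interval:
  assumes "closed F" "(x::rat) \<notin> F"
  obtains e where "e > 0" "{x - e<..<x + e} \<inter> F = {}"
proof -
  obtain e where "e > 0" "{x - e<..<x + e} \<subseteq> - F"
    using open_rat_contains_interval[of "- F" x] assms by (auto simp: closed_def)
  then show ?thesis using that by blast
qed

lemma nowhere_dense_rat_gap:
  assumes "nowhere_dense (A::rat set)" "u < v"
  obtains p q where "u \<le> p" "p < q" "q \<le> v" "{p<..<q} \<inter> A = {}"
proof -
  have "\<not> {u<..<v} \<subseteq> interior (closure A)"
    using assms by (auto simp: nowhere_dense_def dest: dense)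
  then have "\<not> {u<..<v} \<subseteq> closure A"
    by (meson interior_maximal open_greaterThanLessThan)
  then obtain z where "z \<in> {u<..<v}" "z \<notin> closure A" by blast
  then have z: "u < z" "z < v" "z \<in> {u<..<v} - closure A" by auto
  have "open ({u<..<v} - closure A)" by (intro open_Diff open_greaterThanLessThan closed_closure)
  then obtain e where "e > 0" and e: "{z - e<..<z + e} \<subseteq> {u<..<v} - closure A"
    using z(3) by (rule open_rat_contains_interval)
  then have "{max u (z - e)<..<min v (z + e)} \<inter> A = {}"
    using closure_subset by fastforce
  then show ?thesis using that[of "max u (z - e)" "min v (z + e)"] z \<open>e > 0\<close> by auto
qed

lemma nowhere_dense_rat_intro:
  assumes gaps: "\<And>u v. u < v \<Longrightarrow> \<exists>p q. u \<le> p \<and> p < q \<and> q \<le> v \<and> {p<..<q} \<inter> (A::rat set) = {}"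
  shows "nowhere_dense A"
  unfolding nowhere_dense_def
proof (rule ccontr)
  assume "interior (closure A) \<noteq> {}"
  then obtain x where "x \<in> interior (closure A)" by blast
  then obtain e where "e > 0" and e: "{x - e<..<x + e} \<subseteq> closure A"
    using open_rat_contains_interval[OF open_interior] interior_subset by (metis subset_trans)
  then obtain p q where pq: "x - e \<le> p" "p < q" "q \<le> x + e" "{p<..<q} \<inter> A = {}"
    using gaps[of "x - e" "x + e"] by auto
  then have "{p<..<q} \<inter> closure A = {}" by (simp add: open_Int_closure_eq_empty)
  moreover obtain m where "p < m" "m < q" using dense[OF \<open>p < q\<close>] by blast
  moreover have "m \<in> {x - e<..<x + e}" using \<open>p < m\<close> \<open>m < q\<close> pq by auto
  then have "m \<in> closure A" using e by blast
  ultimately show False using \<open>p < m\<close> \<open>m < q\<close> by auto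
qed

lemma nowhere_dense_closure: "nowhere_dense (closure A) \<longleftrightarrow> nowhere_dense A"
  by (simp add: nowhere_dense_def)

lemma inverse_power_less:
  assumes "(e::rat) > 0" "b \<ge> 2"
  obtains n where "1 / b ^ n < e"
proof -
  obtain n :: nat where n: "1 / e < of_nat n" using reals_Archimedean2 by blast
  also have "\<dots> < 2 ^ n" by simp
  also have "\<dots> \<le> b ^ n" using assms(2) by (intro power_mono) auto
  finally have "1 / e < b ^ n" .
  moreover have "b ^ n > 0" using assms(2) by simp
  ultimately show ?thesis using that[of n] assms(1) by (simp add: field_simps)
qed

section \<open>A Cantor set of rationals\<close>

definition two_sided_limit_point :: "'a::linorder set \<Rightarrow> 'a \<Rightarrow> bool" where
  "two_sided_limit_point A x \<longleftrightarrow>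
     (\<forall>a<x. \<exists>w\<in>A. a < w \<and> w < x) \<and> (\<forall>b>x. \<exists>w\<in>A. x < w \<and> w < b)"

lemma two_sided_limit_point_mono:
  "A \<subseteq> B \<Longrightarrow> two_sided_limit_point A x \<Longrightarrow> two_sided_limit_point B x"
  unfolding two_sided_limit_point_def by blast

text \<open>The points whose base-5 expansion has digits in \<open>{0, 1, 2}\<close> and ends in the tail
  \<open>1/4 = 0.111\<dots>\<close>. All multiples \<open>5^n x\<close> have fractional part below \<open>1/2\<close>, which
  makes the set nowhere dense; the tail makes every point a limit from both sides.\<close>

inductive_set quinary_cantor :: "rat set" where
  seed: "1/4 \<in> quinary_cantor"
| digit: "x \<in> quinary_cantor \<Longrightarrow> d \<le> 2 \<Longrightarrow> (x + of_nat d) / 5 \<in> quinary_cantor"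

lemma quinary_cantor_bounds: "x \<in> quinary_cantor \<Longrightarrow> 0 < x \<and> x < 1/2"
  by (induction rule: quinary_cantor.induct) (auto simp: field_simps)

lemma five_power_quarter: "\<exists>k::int. (5::rat) ^ n * (1/4) = of_int k + 1/4"
proof (induction n)
  case 0
  show ?case by (intro exI[of _ 0]) simp
next
  case (Suc n)
  then obtain k where "(5::rat) ^ n * (1/4) = of_int k + 1/4" by blast
  then have "(5::rat) ^ Suc n * (1/4) = of_int (5 * k + 1) + 1/4" by simp
  then show ?case by blast
qed

lemma quinary_cantor_frac_less_half:
  "x \<in> quinary_cantor \<Longrightarrow> 5 ^ n * x < of_int \<lfloor>5 ^ n * x\<rfloor> + 1/2"
proof (induction arbitrary: n rule: quinary_cantor.induct)
  case seed
  obtain k where k: "(5::rat) ^ n * (1/4) = of_int k + 1/4" using five_power_quarter by blast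
  have "\<lfloor>(5::rat) ^ n * (1/4)\<rfloor> = k" unfolding k by (intro floor_unique) auto
  moreover have "(5::rat) ^ n * (1/4) < of_int k + 1/2" using k by linarith
  ultimately show ?case by (simp only:)
next
  case (digit x d)
  show ?case
  proof (cases n)
    case 0
    have "0 < (x + of_nat d) / 5" "(x + of_nat d) / 5 < 1/2"
      using quinary_cantor_bounds[OF quinary_cantor.digit[OF digit.hyps]] by auto
    moreover from this have "\<lfloor>(x + of_nat d) / 5\<rfloor> = 0" by (intro floor_unique) auto
    ultimately show ?thesis using 0 by simp
  next
    case (Suc m)
    have shift: "(5::rat) ^ n * ((x + of_nat d) / 5) = 5 ^ m * x + of_int (5 ^ m * int d)"
      unfolding Suc by (simp add: algebra_simps)
    have "\<lfloor>(5::rat) ^ m * x + of_int (5 ^ m * int d)\<rfloor> = \<lfloor>(5::rat) ^ m * x\<rfloor> + 5 ^ m * int d"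
      by (rule floor_add_int[symmetric])
    then show ?thesis unfolding shift using digit.IH[of m] by simp
  qed
qed

lemma nowhere_dense_quinary_cantor: "nowhere_dense quinary_cantor"
proof (rule nowhere_dense_rat_intro)
  fix u v :: rat assume "u < v"
  then obtain n where n: "1 / 5 ^ n < (v - u) / 2" using inverse_power_less[of "(v - u) / 2" 5] by auto
  define t :: rat where "t = 5 ^ n"
  have "t > 0" by (simp add: t_def)
  define k where "k = \<lceil>t * u\<rceil>"
  have k: "t * u \<le> of_int k" "of_int k < t * u + 1" using ceiling_correct[of "t * u"] by (auto simp: k_def)
  define p where "p = (of_int k + 1/2) / t"
  define q where "q = (of_int k + 1) / t"
  have "u \<le> p" "p < q" using k \<open>t > 0\<close> by (simp_all add: p_def q_def field_simps)
  moreover have "q \<le> v"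
  proof -
    have "q < (t * u + 2) / t" using k \<open>t > 0\<close> unfolding q_def by (intro divide_strict_right_mono) auto
    also have "\<dots> = u + 2 / t" using \<open>t > 0\<close> by (simp add: field_simps)
    finally have "q < u + 2 / t" .
    moreover have "2 / t < v - u" using n by (simp add: t_def field_simps)
    ultimately show ?thesis by simp
  qed
  moreover have "{p<..<q} \<inter> quinary_cantor = {}"
  proof -
    have "z \<notin> quinary_cantor" if "p < z" "z < q" for z
    proof -
      have z: "of_int k + 1/2 < t * z" "t * z < of_int k + 1"
        using that \<open>t > 0\<close> by (auto simp: p_def q_def field_simps)
      then have "\<lfloor>t * z\<rfloor> = k" by (intro floor_unique) auto
      then show ?thesis using quinary_cantor_frac_less_half[of z n] z by (auto simp: t_def)
    qed
    then show ?thesis by auto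
  qed
  ultimately show "\<exists>p q. u \<le> p \<and> p < q \<and> q \<le> v \<and> {p<..<q} \<inter> quinary_cantor = {}" by blast
qed

lemma quinary_cantor_near_seed: "1/4 + 1 / 5 ^ Suc k \<in> quinary_cantor \<and> 1/4 - 1 / 5 ^ Suc k \<in> quinary_cantor"
proof (induction k)
  case 0
  have "(1/4 + of_nat 2) / 5 \<in> quinary_cantor" "(1/4 + of_nat 0) / 5 \<in> quinary_cantor"
    by (simp_all only: quinary_cantor.digit quinary_cantor.seed)
  then show ?case by simp
next
  case (Suc k)
  then have "(1/4 + 1 / 5 ^ Suc k + of_nat 1) / 5 \<in> quinary_cantor"
    "(1/4 - 1 / 5 ^ Suc k + of_nat 1) / 5 \<in> quinary_cantor"
    by (simp_all only: quinary_cantor.digit one_le_numeral)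
  moreover have "(1/4 + 1 / 5 ^ Suc k + of_nat 1) / 5 = 1/4 + 1 / (5::rat) ^ Suc (Suc k)"
    "(1/4 - 1 / 5 ^ Suc k + of_nat 1) / 5 = 1/4 - 1 / (5::rat) ^ Suc (Suc k)"
    by (simp_all add: field_simps)
  ultimately show ?case by (simp only:)
qed

lemma quinary_cantor_seed_two_sided: "two_sided_limit_point quinary_cantor (1/4)"
proof -
  have small: "\<exists>k. 1 / 5 ^ Suc k < e" if e: "e > 0" for e :: rat
  proof -
    obtain k where "1 / 5 ^ k < e" using inverse_power_less[OF e, of 5] by auto
    moreover have "1 / (5::rat) ^ Suc k < 1 / 5 ^ k" by (simp add: field_simps)
    ultimately show ?thesis by (meson less_trans)
  qed
  show ?thesis
    unfolding two_sided_limit_point_def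
  proof (intro conjI allI impI)
    fix a :: rat assume "a < 1/4"
    then have "1/4 - a > 0" by simp
    then obtain k where "1 / 5 ^ Suc k < 1/4 - a" using small by blast
    then show "\<exists>w\<in>quinary_cantor. a < w \<and> w < 1/4"
      using quinary_cantor_near_seed[of k] by (intro bexI[of _ "1/4 - 1 / 5 ^ Suc k"]) auto
  next
    fix b :: rat assume "1/4 < b"
    then have "b - 1/4 > 0" by simp
    then obtain k where "1 / 5 ^ Suc k < b - 1/4" using small by blast
    then show "\<exists>w\<in>quinary_cantor. 1/4 < w \<and> w < b"
      using quinary_cantor_near_seed[of k] by (intro bexI[of _ "1/4 + 1 / 5 ^ Suc k"]) auto
  qed
qed

lemma quinary_cantor_two_sided: "x \<in> quinary_cantor \<Longrightarrow> two_sided_limit_point quinary_cantor x"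
proof (induction rule: quinary_cantor.induct)
  case seed
  show ?case by (rule quinary_cantor_seed_two_sided)
next
  case (digit x d)
  show ?case
    unfolding two_sided_limit_point_def
  proof (intro conjI allI impI)
    fix a assume "a < (x + of_nat d) / 5"
    then have "5 * a - of_nat d < x" by (simp add: field_simps)
    then obtain w where "w \<in> quinary_cantor" "5 * a - of_nat d < w" "w < x"
      using digit.IH unfolding two_sided_limit_point_def by blast
    then show "\<exists>w\<in>quinary_cantor. a < w \<and> w < (x + of_nat d) / 5"
      using digit.hyps(2) by (intro bexI[of _ "(w + of_nat d) / 5"]) (auto intro: quinary_cantor.digit)
  next
    fix b assume "(x + of_nat d) / 5 < b"
    then have "x < 5 * b - of_nat d" by (simp add: field_simps)
    then obtain w where "w \<in> quinary_cantor" "x < w" "w < 5 * b - of_nat d"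
      using digit.IH unfolding two_sided_limit_point_def by blast
    then show "\<exists>w\<in>quinary_cantor. (x + of_nat d) / 5 < w \<and> w < b"
      using digit.hyps(2) by (intro bexI[of _ "(w + of_nat d) / 5"]) (auto intro: quinary_cantor.digit)
  qed
qed

section \<open>Filling the gaps of a closed set\<close>

lemma floor_eq_if_scaled_floor_eq:
  fixes X W :: "'a::floor_ceiling"
  assumes "c > 0" "\<lfloor>of_int c * X\<rfloor> = \<lfloor>of_int c * W\<rfloor>"
  shows "\<lfloor>X\<rfloor> = \<lfloor>W\<rfloor>"
proof -
  have iff: "\<lfloor>Y\<rfloor> = j \<longleftrightarrow> c * j \<le> \<lfloor>of_int c * Y\<rfloor> \<and> \<lfloor>of_int c * Y\<rfloor> < c * (j + 1)"
    for Y :: 'a and j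
  proof -
    have pos: "(0::'a) < of_int c" using assms(1) by simp
    have "\<lfloor>Y\<rfloor> = j \<longleftrightarrow>
        of_int c * of_int j \<le> of_int c * Y \<and> of_int c * Y < of_int c * (of_int j + 1)"
      unfolding floor_eq_iff mult_le_cancel_left_pos[OF pos] mult_less_cancel_left_pos[OF pos] ..
    also have "\<dots> \<longleftrightarrow> c * j \<le> \<lfloor>of_int c * Y\<rfloor> \<and> \<lfloor>of_int c * Y\<rfloor> < c * (j + 1)"
      unfolding le_floor_iff floor_less_iff by simp
    finally show ?thesis .
  qed
  show ?thesis using iff[of X "\<lfloor>X\<rfloor>"] iff[of W "\<lfloor>X\<rfloor>"] assms(2) by simp
qed

definition dyadic_floor :: "nat \<Rightarrow> rat \<Rightarrow> rat" where
  "dyadic_floor n x = of_int \<lfloor>2 ^ n * x\<rfloor> / 2 ^ n"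

lemma dyadic_floor_bounds: "dyadic_floor n x \<le> x \<and> x < dyadic_floor n x + 1 / 2 ^ n"
proof -
  have "of_int \<lfloor>2 ^ n * x\<rfloor> \<le> 2 ^ n * x" "2 ^ n * x < of_int \<lfloor>2 ^ n * x\<rfloor> + (1::rat)"
    by linarith+
  then show ?thesis unfolding dyadic_floor_def by (simp add: field_simps)
qed

lemma dyadic_floor_coarser:
  assumes "dyadic_floor n x \<le> w" "w < dyadic_floor n x + 1 / 2 ^ n" "m \<le> n"
  shows "dyadic_floor m w = dyadic_floor m x"
proof -
  have "of_int \<lfloor>2 ^ n * x\<rfloor> \<le> (2::rat) ^ n * w"
    using assms(1) unfolding dyadic_floor_def by (simp add: pos_divide_le_eq mult.commute)
  moreover have "(2::rat) ^ n * w < of_int \<lfloor>2 ^ n * x\<rfloor> + 1"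
    using assms(2) unfolding dyadic_floor_def
    by (simp add: add_divide_distrib[symmetric] pos_less_divide_eq mult.commute)
  ultimately have same: "\<lfloor>(2::rat) ^ n * w\<rfloor> = \<lfloor>2 ^ n * x\<rfloor>" by (rule floor_unique)
  have "(2::rat) ^ n = 2 ^ (n - m) * 2 ^ m" using assms(3) by (simp flip: power_add)
  then have "\<lfloor>of_int (2 ^ (n - m)) * ((2::rat) ^ m * w)\<rfloor> = \<lfloor>of_int (2 ^ (n - m)) * ((2::rat) ^ m * x)\<rfloor>"
    using same by (simp add: mult.assoc)
  then have "\<lfloor>(2::rat) ^ m * w\<rfloor> = \<lfloor>2 ^ m * x\<rfloor>"
    by (rule floor_eq_if_scaled_floor_eq[rotated]) simp
  then show ?thesis unfolding dyadic_floor_def by simp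
qed

text \<open>For \<open>x\<close> outside a closed set \<open>F\<close>, the cell of \<open>x\<close> is the coarsest closed dyadic
  interval containing \<open>x\<close> and missing \<open>F\<close>. The cells partition \<open>- F\<close>, and
  \<open>cantor_fill F\<close> places an affine copy of \<open>quinary_cantor\<close> inside each of them.\<close>

definition dyadic_cell_avoids :: "rat set \<Rightarrow> nat \<Rightarrow> rat \<Rightarrow> bool" where
  "dyadic_cell_avoids F n x \<longleftrightarrow> {dyadic_floor n x .. dyadic_floor n x + 1 / 2 ^ n} \<inter> F = {}"

definition cell_level :: "rat set \<Rightarrow> rat \<Rightarrow> nat" where
  "cell_level F x = (LEAST n. dyadic_cell_avoids F n x)"

definition cell_start :: "rat set \<Rightarrow> rat \<Rightarrow> rat" where
  "cell_start F x = dyadic_floor (cell_level F x) x"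

definition cantor_fill :: "rat set \<Rightarrow> rat set" where
  "cantor_fill F = {x. x \<notin> F \<and> (x - cell_start F x) * 2 ^ cell_level F x \<in> quinary_cantor}"

lemma cell_start_bounds: "cell_start F x \<le> x \<and> x < cell_start F x + 1 / 2 ^ cell_level F x"
  unfolding cell_start_def by (rule dyadic_floor_bounds)

context
  fixes F :: "rat set"
  assumes closed_F: "closed F"
begin

lemma cell_avoids:
  assumes "x \<notin> F"
  shows "{cell_start F x .. cell_start F x + 1 / 2 ^ cell_level F x} \<inter> F = {}"
proof -
  obtain e where "e > 0" and e: "{x - e<..<x + e} \<inter> F = {}"
    using closed_rat_avoids_interval[OF closed_F assms] .
  obtain n where n: "1 / 2 ^ n < e" using inverse_power_less[OF \<open>e > 0\<close>, of 2] by auto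
  have "{dyadic_floor n x .. dyadic_floor n x + 1 / 2 ^ n} \<subseteq> {x - e<..<x + e}"
    using dyadic_floor_bounds[of n x] n by auto
  then have "dyadic_cell_avoids F n x" unfolding dyadic_cell_avoids_def using e by blast
  then have "dyadic_cell_avoids F (cell_level F x) x" unfolding cell_level_def by (rule LeastI)
  then show ?thesis unfolding dyadic_cell_avoids_def cell_start_def .
qed

lemma cell_eq:
  assumes "y \<notin> F" "cell_start F y \<le> z" "z < cell_start F y + 1 / 2 ^ cell_level F y"
  shows "cell_level F z = cell_level F y \<and> cell_start F z = cell_start F y"
proof -
  define N where "N = cell_level F y"
  have coarser: "dyadic_floor m z = dyadic_floor m y" if "m \<le> N" for m
    using dyadic_floor_coarser[OF assms(2,3)[unfolded cell_start_def] that[unfolded N_def]] .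
  have "dyadic_cell_avoids F N y"
    using cell_avoids[OF assms(1)] unfolding dyadic_cell_avoids_def cell_start_def N_def .
  have "cell_level F z = N" unfolding cell_level_def
  proof (rule Least_equality)
    show "dyadic_cell_avoids F N z"
      using \<open>dyadic_cell_avoids F N y\<close> coarser[of N] unfolding dyadic_cell_avoids_def by simp
  next
    fix m assume avoids: "dyadic_cell_avoids F m z"
    show "N \<le> m"
    proof (rule ccontr)
      assume "\<not> N \<le> m"
      then have "m < N" by simp
      then have "dyadic_cell_avoids F m y"
        using avoids coarser[of m] unfolding dyadic_cell_avoids_def by simp
      then show False using not_less_Least[OF \<open>m < N\<close>[unfolded N_def cell_level_def]] by blast
    qed
  qed
  then show ?thesis using coarser[of N] unfolding cell_start_def N_def by simp
qed

lemma cell_start_unique: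
  assumes "y \<notin> F" "y' \<notin> F"
    and "cell_start F y \<le> z" "z < cell_start F y + 1 / 2 ^ cell_level F y"
    and "cell_start F y' \<le> z" "z < cell_start F y' + 1 / 2 ^ cell_level F y'"
  shows "cell_start F y' = cell_start F y \<and> cell_level F y' = cell_level F y"
  using cell_eq[OF assms(1,3,4)] cell_eq[OF assms(2,5,6)] by simp

lemma cantor_fill_cell_iff:
  assumes "y \<notin> F" "cell_start F y \<le> w" "w < cell_start F y + 1 / 2 ^ cell_level F y"
  shows "w \<in> cantor_fill F \<longleftrightarrow> (w - cell_start F y) * 2 ^ cell_level F y \<in> quinary_cantor"
proof -
  have "w \<in> {cell_start F y .. cell_start F y + 1 / 2 ^ cell_level F y}" using assms(2,3) by simp
  then have "w \<notin> F" using cell_avoids[OF assms(1)] by blast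
  then show ?thesis using cell_eq[OF assms] unfolding cantor_fill_def by simp
qed

lemma cantor_fill_intro:
  assumes "y \<notin> F" "w \<in> quinary_cantor"
  shows "cell_start F y + w / 2 ^ cell_level F y \<in> cantor_fill F"
proof -
  define N P where "N = cell_level F y" and "P = cell_start F y"
  have "0 < w" "w < 1/2" using quinary_cantor_bounds[OF assms(2)] by auto
  then have "P \<le> P + w / 2 ^ N" "P + w / 2 ^ N < P + 1 / 2 ^ N" by (simp_all add: field_simps)
  then show ?thesis
    using cantor_fill_cell_iff[OF assms(1)] assms(2) unfolding N_def[symmetric] P_def[symmetric] by simp
qed

lemma cantor_fill_two_sided:
  assumes "x \<in> cantor_fill F"
  shows "two_sided_limit_point (cantor_fill F) x"
proof -
  define N P where "N = cell_level F x" and "P = cell_start F x"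
  define w where "w = (x - P) * 2 ^ N"
  have "x \<notin> F" "w \<in> quinary_cantor" using assms unfolding cantor_fill_def w_def N_def P_def by auto
  have x: "x = P + w / 2 ^ N" unfolding w_def by simp
  have fill: "P + w' / 2 ^ N \<in> cantor_fill F" if "w' \<in> quinary_cantor" for w'
    using cantor_fill_intro[OF \<open>x \<notin> F\<close> that] unfolding N_def P_def .
  have below: "a < P + w' / 2 ^ N \<and> P + w' / 2 ^ N < x" if "(a - P) * 2 ^ N < w'" "w' < w" for a w'
    using that unfolding x by (simp add: field_simps)
  have above: "x < P + w' / 2 ^ N \<and> P + w' / 2 ^ N < b" if "w < w'" "w' < (b - P) * 2 ^ N" for b w'
    using that unfolding x by (simp add: field_simps)
  show ?thesis
    unfolding two_sided_limit_point_def
  proof (intro conjI allI impI)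
    fix a assume "a < x"
    then have "(a - P) * 2 ^ N < w" unfolding x by (simp add: field_simps)
    then obtain w' where "w' \<in> quinary_cantor" "(a - P) * 2 ^ N < w'" "w' < w"
      using quinary_cantor_two_sided[OF \<open>w \<in> quinary_cantor\<close>]
      unfolding two_sided_limit_point_def by blast
    then show "\<exists>v\<in>cantor_fill F. a < v \<and> v < x" using fill below by blast
  next
    fix b assume "x < b"
    then have "w < (b - P) * 2 ^ N" unfolding x by (simp add: field_simps)
    then obtain w' where "w' \<in> quinary_cantor" "w < w'" "w' < (b - P) * 2 ^ N"
      using quinary_cantor_two_sided[OF \<open>w \<in> quinary_cantor\<close>]
      unfolding two_sided_limit_point_def by blast
    then show "\<exists>v\<in>cantor_fill F. x < v \<and> v < b" using fill above by blast
  qed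
qed

lemma cantor_fill_below:
  assumes "x \<notin> F"
  obtains k where "k \<in> cantor_fill F" "k < x" "{k..x} \<inter> F = {}"
proof -
  define N P where "N = cell_level F x" and "P = cell_start F x"
  have cell: "{P .. P + 1 / 2 ^ N} \<inter> F = {}" "P \<le> x" "x < P + 1 / 2 ^ N"
    using cell_avoids[OF assms] cell_start_bounds[of F x] unfolding N_def P_def by auto
  then have "P \<in> {P .. P + 1 / 2 ^ N}" by simp
  then have "P \<notin> F" using cell(1) by blast
  then obtain e where "e > 0" and e: "{P - e<..<P + e} \<inter> F = {}"
    using closed_rat_avoids_interval[OF closed_F] by blast
  define x' where "x' = P - e / 2"
  have "x' \<in> {P - e<..<P + e}" using \<open>e > 0\<close> unfolding x'_def by simp
  then have "x' \<notin> F" using e by blast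
  \<comment> \<open>The cell of \<open>x'\<close> ends before the cell of \<open>x\<close> begins, and its seed point is the witness.\<close>
  define N' P' where "N' = cell_level F x'" and "P' = cell_start F x'"
  have cell': "{P' .. P' + 1 / 2 ^ N'} \<inter> F = {}" "P' \<le> x'" "x' < P' + 1 / 2 ^ N'"
    using cell_avoids[OF \<open>x' \<notin> F\<close>] cell_start_bounds[of F x'] unfolding N'_def P'_def by auto
  have "P' + 1 / 2 ^ N' \<le> P"
  proof (rule ccontr)
    assume "\<not> ?thesis"
    then have "P' = P"
      using cell_start_unique[OF \<open>x' \<notin> F\<close> assms, of P] cell cell' \<open>e > 0\<close>
      unfolding N_def P_def N'_def P'_def x'_def by auto
    then show False using cell'(2) \<open>e > 0\<close> unfolding x'_def by simp
  qed
  define k where "k = P' + (1/4) / 2 ^ N'"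
  have "k \<in> cantor_fill F"
    using cantor_fill_intro[OF \<open>x' \<notin> F\<close> quinary_cantor.seed] unfolding k_def N'_def P'_def .
  moreover have "P' < k" "k < P' + 1 / 2 ^ N'" unfolding k_def by (simp_all add: field_simps)
  moreover have "{k..x} \<subseteq> {P' .. P' + 1 / 2 ^ N'} \<union> {P - e<..<P + e} \<union> {P .. P + 1 / 2 ^ N}"
    using \<open>P' + 1 / 2 ^ N' \<le> P\<close> cell(3) cell'(3) \<open>e > 0\<close> \<open>P' < k\<close> unfolding x'_def by auto
  then have "{k..x} \<inter> F = {}" using cell(1) cell'(1) e by blast
  ultimately show ?thesis using that \<open>P' + 1 / 2 ^ N' \<le> P\<close> cell(2) by simp
qed

lemma cantor_fill_above:
  assumes "x \<notin> F"
  obtains k where "k \<in> cantor_fill F" "x < k" "{x..k} \<inter> F = {}"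
proof -
  define N P where "N = cell_level F x" and "P = cell_start F x"
  define Q where "Q = P + 1 / 2 ^ N"
  have cell: "{P .. Q} \<inter> F = {}" "P \<le> x" "x < Q"
    using cell_avoids[OF assms] cell_start_bounds[of F x] unfolding N_def P_def Q_def by auto
  then have "Q \<in> {P .. Q}" by simp
  then have "Q \<notin> F" using cell(1) by blast
  then obtain e where "e > 0" and e: "{Q - e<..<Q + e} \<inter> F = {}"
    using closed_rat_avoids_interval[OF closed_F] by blast
  define x' where "x' = Q + e / 2"
  have "x' \<in> {Q - e<..<Q + e}" using \<open>e > 0\<close> unfolding x'_def by simp
  then have "x' \<notin> F" using e by blast
  define N' P' where "N' = cell_level F x'" and "P' = cell_start F x'"
  have cell': "{P' .. P' + 1 / 2 ^ N'} \<inter> F = {}" "P' \<le> x'" "x' < P' + 1 / 2 ^ N'"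
    using cell_avoids[OF \<open>x' \<notin> F\<close>] cell_start_bounds[of F x'] unfolding N'_def P'_def by auto
  have "Q \<le> P'"
  proof (rule ccontr)
    assume "\<not> ?thesis"
    then have "P' = P \<and> N' = N"
      using cell_start_unique[OF assms \<open>x' \<notin> F\<close>, of "max P P'"] cell cell' \<open>e > 0\<close>
      unfolding N_def P_def N'_def P'_def Q_def x'_def by auto
    then show False using cell'(3) \<open>e > 0\<close> unfolding x'_def Q_def by simp
  qed
  define k where "k = P' + (1/4) / 2 ^ N'"
  have "k \<in> cantor_fill F"
    using cantor_fill_intro[OF \<open>x' \<notin> F\<close> quinary_cantor.seed] unfolding k_def N'_def P'_def .
  moreover have "P' < k" "k < P' + 1 / 2 ^ N'" unfolding k_def by (simp_all add: field_simps)
  moreover have "{x..k} \<subseteq> {P .. Q} \<union> {Q - e<..<Q + e} \<union> {P' .. P' + 1 / 2 ^ N'}"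
    using \<open>Q \<le> P'\<close> cell(2) cell'(2) \<open>e > 0\<close> \<open>k < P' + 1 / 2 ^ N'\<close> unfolding x'_def by auto
  then have "{x..k} \<inter> F = {}" using cell(1) cell'(1) e by blast
  ultimately show ?thesis using that \<open>Q \<le> P'\<close> cell(3) by simp
qed

lemma two_sided_limit_Un_cantor_fill:
  assumes "x \<in> F \<union> cantor_fill F"
  shows "two_sided_limit_point (F \<union> cantor_fill F) x"
proof (cases "x \<in> F")
  case False
  then show ?thesis
    using assms cantor_fill_two_sided two_sided_limit_point_mono[of "cantor_fill F"] by blast
next
  case True
  show ?thesis
    unfolding two_sided_limit_point_def
  proof (intro conjI allI impI)
    fix a assume "a < x"
    then obtain m where m: "a < m" "m < x" using dense by blast
    show "\<exists>w\<in>F \<union> cantor_fill F. a < w \<and> w < x"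
    proof (cases "m \<in> F")
      case False
      then obtain k where "k \<in> cantor_fill F" "m < k" "{m..k} \<inter> F = {}" by (rule cantor_fill_above)
      moreover from this have "k < x" using True m(2) by (meson atLeastAtMost_iff disjoint_iff not_less less_imp_le)
      ultimately show ?thesis using m(1) by auto
    qed (use m in auto)
  next
    fix b assume "x < b"
    then obtain m where m: "x < m" "m < b" using dense by blast
    show "\<exists>w\<in>F \<union> cantor_fill F. x < w \<and> w < b"
    proof (cases "m \<in> F")
      case False
      then obtain k where "k \<in> cantor_fill F" "k < m" "{k..m} \<inter> F = {}" by (rule cantor_fill_below)
      moreover from this have "x < k" using True m(1) by (meson atLeastAtMost_iff disjoint_iff not_less less_imp_le)
      ultimately show ?thesis using m(2) by auto
    qed (use m in auto)
  qed
qed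

lemma nowhere_dense_Un_cantor_fill:
  assumes "nowhere_dense F"
  shows "nowhere_dense (F \<union> cantor_fill F)"
proof (rule nowhere_dense_rat_intro)
  fix u v :: rat assume "u < v"
  then obtain p q where pq: "u \<le> p" "p < q" "q \<le> v" "{p<..<q} \<inter> F = {}"
    using nowhere_dense_rat_gap[OF assms] by blast
  then obtain z where z: "p < z" "z < q" using dense by blast
  then have "z \<notin> F" using pq(4) by auto
  define N P where "N = cell_level F z" and "P = cell_start F z"
  have "P \<le> z" "z < P + 1 / 2 ^ N" using cell_start_bounds[of F z] unfolding N_def P_def by auto
  define u' v' where "u' = max p P" and "v' = min q (P + 1 / 2 ^ N)"
  have "u' < v'" using z \<open>P \<le> z\<close> \<open>z < P + 1 / 2 ^ N\<close> pq(2) unfolding u'_def v'_def by auto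
  then have "(u' - P) * 2 ^ N < (v' - P) * 2 ^ N" by simp
  then obtain s t where st: "(u' - P) * 2 ^ N \<le> s" "s < t" "t \<le> (v' - P) * 2 ^ N"
    "{s<..<t} \<inter> quinary_cantor = {}"
    using nowhere_dense_rat_gap[OF nowhere_dense_quinary_cantor] by blast
  define p' q' where "p' = P + s / 2 ^ N" and "q' = P + t / 2 ^ N"
  have "u' \<le> p'" "q' \<le> v'" "p' < q'"
    using st(1-3) unfolding p'_def q'_def by (simp_all add: field_simps)
  moreover have "w \<notin> F \<union> cantor_fill F" if "p' < w" "w < q'" for w
  proof -
    have w: "P \<le> w" "w < P + 1 / 2 ^ N" "p < w" "w < q"
      using that \<open>u' \<le> p'\<close> \<open>q' \<le> v'\<close> unfolding u'_def v'_def by auto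
    have "s < (w - P) * 2 ^ N" "(w - P) * 2 ^ N < t"
      using that unfolding p'_def q'_def by (simp_all add: field_simps)
    then have "(w - P) * 2 ^ N \<notin> quinary_cantor" using st(4) by auto
    then show ?thesis
      using pq(4) w cantor_fill_cell_iff[OF \<open>z \<notin> F\<close>] unfolding N_def P_def by auto
  qed
  ultimately show "\<exists>p q. u \<le> p \<and> p < q \<and> q \<le> v \<and> {p<..<q} \<inter> (F \<union> cantor_fill F) = {}"
    using pq(1,3) unfolding u'_def v'_def
    by (intro exI[of _ p'] exI[of _ q']) auto
qed

end

section \<open>Back and forth\<close>

lemma order_iso_of_relation:
  fixes U :: "('a::linorder \<times> 'a) set"
  assumes dom: "\<And>x. \<exists>y. (x, y) \<in> U" and ran: "\<And>y. \<exists>x. (x, y) \<in> U"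
    and order: "\<And>a b c d. (a, b) \<in> U \<Longrightarrow> (c, d) \<in> U \<Longrightarrow> a < c \<longleftrightarrow> b < d"
  obtains f where "bij f" "\<And>x y. x \<le> y \<longleftrightarrow> f x \<le> f y" "\<And>x. (x, f x) \<in> U"
proof -
  define f where "f x = (SOME y. (x, y) \<in> U)" for x
  have graph: "(x, f x) \<in> U" for x unfolding f_def using someI_ex[OF dom] .
  have mono: "x \<le> y \<longleftrightarrow> f x \<le> f y" for x y
    using order[OF graph[of y] graph[of x]] by (simp add: not_less[symmetric])
  have "inj f"
  proof (rule injI)
    fix x y assume "f x = f y"
    then show "x = y" using mono[of x y] mono[of y x] by auto
  qed
  moreover have "surj f"
  proof -
    have "y = f x" if "(x, y) \<in> U" for x y
      using order[OF graph[of x] that] order[OF that graph[of x]] by simp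
    then show ?thesis using ran by (metis surj_def)
  qed
  ultimately have "bij f" by (simp add: bij_def)
  then show ?thesis using that mono graph by blast
qed

definition extend_both :: "(('a \<times> 'a) set \<Rightarrow> bool) \<Rightarrow> ('a \<times> 'a) set \<Rightarrow> 'a \<Rightarrow> ('a \<times> 'a) set" where
  "extend_both P R z =
     (let R' = insert (z, SOME y. P (insert (z, y) R)) R in insert (SOME x. P (insert (x, z) R'), z) R')"

lemma extend_both_properties:
  assumes "P R"
    and forth_step: "\<And>R x. P R \<Longrightarrow> \<exists>y. P (insert (x, y) R)"
    and back_step: "\<And>R y. P R \<Longrightarrow> \<exists>x. P (insert (x, y) R)"
  shows "P (extend_both P R z) \<and> R \<subseteq> extend_both P R z \<and>
    (\<exists>y. (z, y) \<in> extend_both P R z) \<and> (\<exists>x. (x, z) \<in> extend_both P R z)"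
proof -
  define R' where "R' = insert (z, SOME y. P (insert (z, y) R)) R"
  have "P R'" unfolding R'_def using someI_ex[OF forth_step[OF assms(1)]] .
  then have "P (insert (SOME x. P (insert (x, z) R'), z) R')" using someI_ex[OF back_step] by blast
  then show ?thesis unfolding extend_both_def R'_def[symmetric] Let_def by (auto simp: R'_def)
qed

primrec back_forth_chain :: "(('a::countable \<times> 'a) set \<Rightarrow> bool) \<Rightarrow> ('a \<times> 'a) set \<Rightarrow> nat \<Rightarrow> ('a \<times> 'a) set" where
  "back_forth_chain P R0 0 = R0"
| "back_forth_chain P R0 (Suc n) = extend_both P (back_forth_chain P R0 n) (from_nat n)"

lemma back_forth_chain_step:
  assumes "P R0"
    and forth_step: "\<And>R x. P R \<Longrightarrow> \<exists>y. P (insert (x, y) R)"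
    and back_step: "\<And>R y. P R \<Longrightarrow> \<exists>x. P (insert (x, y) R)"
  shows "P (back_forth_chain P R0 (Suc n)) \<and> back_forth_chain P R0 n \<subseteq> back_forth_chain P R0 (Suc n) \<and>
    (\<exists>y. (from_nat n, y) \<in> back_forth_chain P R0 (Suc n)) \<and>
    (\<exists>x. (x, from_nat n) \<in> back_forth_chain P R0 (Suc n))"
proof (induction n)
  case 0
  show ?case using extend_both_properties[OF \<open>P R0\<close> forth_step back_step] by simp
next
  case (Suc n)
  then show ?case using extend_both_properties[of P "back_forth_chain P R0 (Suc n)", OF _ forth_step back_step] by simp
qed

theorem back_and_forth:
  fixes P :: "('a::{countable, linorder} \<times> 'a) set \<Rightarrow> bool"
  assumes "P R0"
    and forth_step: "\<And>R x. P R \<Longrightarrow> \<exists>y. P (insert (x, y) R)"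
    and back_step: "\<And>R y. P R \<Longrightarrow> \<exists>x. P (insert (x, y) R)"
    and order: "\<And>R a b c d. P R \<Longrightarrow> (a, b) \<in> R \<Longrightarrow> (c, d) \<in> R \<Longrightarrow> a < c \<longleftrightarrow> b < d"
  obtains f where "bij f" "\<And>x y. x \<le> y \<longleftrightarrow> f x \<le> f y" "\<And>x. \<exists>R. P R \<and> (x, f x) \<in> R"
proof -
  let ?R = "back_forth_chain P R0"
  note step = back_forth_chain_step[OF \<open>P R0\<close> forth_step back_step]
  have P: "P (?R n)" for n using step \<open>P R0\<close> by (cases n) auto
  have mono: "m \<le> n \<Longrightarrow> ?R m \<subseteq> ?R n" for m n by (rule lift_Suc_mono_le) (use step in auto)
  define U where "U = (\<Union>n. ?R n)"
  have "\<exists>y. (x, y) \<in> U" "\<exists>x. (x, y) \<in> U" for x y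
  proof -
    obtain y' where "(x, y') \<in> ?R (Suc (to_nat x))"
      using step[of "to_nat x"] by (auto simp del: back_forth_chain.simps)
    moreover obtain x' where "(x', y) \<in> ?R (Suc (to_nat y))"
      using step[of "to_nat y"] by (auto simp del: back_forth_chain.simps)
    ultimately show "\<exists>y. (x, y) \<in> U" "\<exists>x. (x, y) \<in> U" unfolding U_def by blast+
  qed
  moreover have "a < c \<longleftrightarrow> b < d" if ab: "(a, b) \<in> U" and cd: "(c, d) \<in> U" for a b c d
  proof -
    obtain m n where "(a, b) \<in> ?R m" "(c, d) \<in> ?R n" using ab cd unfolding U_def by blast
    then have "(a, b) \<in> ?R (max m n)" "(c, d) \<in> ?R (max m n)" using mono by (meson max.cobounded1 max.cobounded2 subsetD)+
    then show ?thesis using order P by blast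
  qed
  ultimately obtain f where "bij f" "\<And>x y. x \<le> y \<longleftrightarrow> f x \<le> f y" "\<And>x. (x, f x) \<in> U"
    by (rule order_iso_of_relation) blast+
  then show ?thesis using that P unfolding U_def by blast
qed

section \<open>Partial isomorphisms fixing a closed set\<close>

definition order_compatible :: "('a::linorder \<times> 'a) set \<Rightarrow> bool" where
  "order_compatible R \<longleftrightarrow> (\<forall>a b c d. (a, b) \<in> R \<longrightarrow> (c, d) \<in> R \<longrightarrow> (a < c \<longleftrightarrow> b < d))"

lemma order_compatibleD: "order_compatible R \<Longrightarrow> (a, b) \<in> R \<Longrightarrow> (c, d) \<in> R \<Longrightarrow> a < c \<longleftrightarrow> b < d"
  unfolding order_compatible_def by blast

lemma order_compatible_eq: "order_compatible R \<Longrightarrow> (a, b) \<in> R \<Longrightarrow> (c, d) \<in> R \<Longrightarrow> a = c \<longleftrightarrow> b = d"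
  using order_compatibleD[of R a b c d] order_compatibleD[of R c d a b] by (metis neqE less_irrefl)

lemma order_compatible_converse: "order_compatible (converse R) \<longleftrightarrow> order_compatible R"
  unfolding order_compatible_def by auto

lemma order_compatible_insert:
  assumes "order_compatible R" and "\<And>a b. (a, b) \<in> R \<Longrightarrow> (a < x \<longleftrightarrow> b < y) \<and> (x < a \<longleftrightarrow> y < b)"
  shows "order_compatible (insert (x, y) R)"
proof -
  have key: "a < c \<longleftrightarrow> b < d" if "(a, b) \<in> insert (x, y) R" "(c, d) \<in> insert (x, y) R" for a b c d
    using that assms(2)[of a b] assms(2)[of c d] order_compatibleD[OF assms(1), of a b c d] by auto
  show ?thesis unfolding order_compatible_def by (intro allI impI) (rule key)
qed

text \<open>For \<open>t \<notin> F\<close>, the convex component of \<open>- F\<close> containing \<open>t\<close>.\<close>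

definition compl_component :: "'a::linorder set \<Rightarrow> 'a \<Rightarrow> 'a set" where
  "compl_component F t = {z. z \<notin> F \<and> (\<forall>f\<in>F. f < t \<longleftrightarrow> f < z)}"

lemma compl_component_self: "t \<notin> F \<Longrightarrow> t \<in> compl_component F t"
  unfolding compl_component_def by auto

lemma compl_component_convex:
  assumes "z1 \<in> compl_component F t" "z2 \<in> compl_component F t" "z1 \<le> w" "w \<le> z2"
  shows "w \<in> compl_component F t"
proof -
  have z1: "z1 \<notin> F" "\<forall>f\<in>F. f < t \<longleftrightarrow> f < z1" and z2: "z2 \<notin> F" "\<forall>f\<in>F. f < t \<longleftrightarrow> f < z2"
    using assms(1,2) unfolding compl_component_def by auto
  have side: "f < t \<longleftrightarrow> f < w" if "f \<in> F" for f
  proof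
    assume "f < t"
    then show "f < w" using z1(2) that assms(3) by (meson less_le_trans)
  next
    assume "f < w"
    then show "f < t" using z2(2) that assms(4) by (meson less_le_trans)
  qed
  have "w \<notin> F"
  proof
    assume "w \<in> F"
    then have "\<not> w < z2" using side[of w] z2(2) by simp
    then show False using assms(4) z2(1) \<open>w \<in> F\<close> by auto
  qed
  then show ?thesis using side unfolding compl_component_def by simp
qed

lemma compl_component_nbhd:
  assumes "closed F" "(z::rat) \<in> compl_component F t"
  obtains e where "e > 0" "{z - e<..<z + e} \<subseteq> compl_component F t"
proof -
  have "z \<notin> F" and z: "\<forall>f\<in>F. f < t \<longleftrightarrow> f < z" using assms(2) unfolding compl_component_def by auto
  then obtain e where "e > 0" and e: "{z - e<..<z + e} \<inter> F = {}"
    using closed_rat_avoids_interval[OF assms(1)] by blast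
  have "w \<in> compl_component F t" if w: "z - e < w" "w < z + e" for w
  proof -
    have "f < z \<longleftrightarrow> f < w" if "f \<in> F" for f
    proof -
      have "f \<notin> {z - e<..<z + e}" using e that by blast
      then have "f \<le> z - e \<or> z + e \<le> f" by auto
      then show ?thesis using w \<open>e > 0\<close> by auto
    qed
    moreover have "w \<notin> F" using e w by auto
    ultimately show ?thesis using z unfolding compl_component_def by simp
  qed
  then show ?thesis by (intro that[OF \<open>e > 0\<close>]) auto
qed

lemma compl_component_extend:
  assumes "z \<in> compl_component F t" "{min k z .. max k z} \<inter> F = {}"
  shows "k \<in> compl_component F t"
proof -
  have "k \<in> {min k z .. max k z}" by simp
  then have "k \<notin> F" using assms(2) by blast
  moreover have "f < z \<longleftrightarrow> f < k" if "f \<in> F" for f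
  proof -
    have "f \<notin> {min k z .. max k z}" using that assms(2) by blast
    then show ?thesis by (cases "k \<le> z") (auto simp: min_def max_def)
  qed
  ultimately show ?thesis using assms(1) unfolding compl_component_def by simp
qed

text \<open>A pair \<open>(x, y)\<close> stands for \<open>x \<mapsto> y\<close>: partial order isomorphisms that are the identity
  on \<open>F\<close> and finite outside it.\<close>

definition admissible :: "'a::linorder set \<Rightarrow> ('a \<times> 'a) set \<Rightarrow> bool" where
  "admissible F R \<longleftrightarrow> order_compatible R \<and> (\<forall>f\<in>F. (f, f) \<in> R) \<and> finite {p\<in>R. snd p \<notin> F}"

lemma admissible_fixes: "admissible F R \<Longrightarrow> (a, b) \<in> R \<Longrightarrow> a \<in> F \<or> b \<in> F \<Longrightarrow> a = b"
  unfolding admissible_def using order_compatible_eq by metis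

lemma admissible_same_side:
  assumes "admissible F R" "(a, b) \<in> R" "f \<in> F"
  shows "f < a \<longleftrightarrow> f < b"
  using assms order_compatibleD[of R f f a b] unfolding admissible_def by auto

lemma admissible_converse:
  assumes "admissible F R"
  shows "admissible F (converse R)"
proof -
  have "{p\<in>converse R. snd p \<notin> F} = prod.swap ` {p\<in>R. snd p \<notin> F}"
    using admissible_fixes[OF assms] by force
  then have "finite {p\<in>converse R. snd p \<notin> F}" using assms unfolding admissible_def by simp
  then show ?thesis using assms unfolding admissible_def order_compatible_converse by simp
qed

lemma admissible_insert:
  assumes "admissible F R" "order_compatible (insert (x, y) R)"
  shows "admissible F (insert (x, y) R)"
proof -
  have "{p\<in>insert (x, y) R. snd p \<notin> F} \<subseteq> insert (x, y) {p\<in>R. snd p \<notin> F}" by auto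
  then have "finite {p\<in>insert (x, y) R. snd p \<notin> F}"
    using assms(1) unfolding admissible_def by (simp add: finite_subset)
  then show ?thesis using assms unfolding admissible_def by simp
qed

definition lower_pairs :: "'a::linorder set \<Rightarrow> ('a \<times> 'a) set \<Rightarrow> 'a \<Rightarrow> ('a \<times> 'a) set" where
  "lower_pairs F R x = {p\<in>R. fst p < x \<and> snd p \<in> compl_component F x}"

definition upper_pairs :: "'a::linorder set \<Rightarrow> ('a \<times> 'a) set \<Rightarrow> 'a \<Rightarrow> ('a \<times> 'a) set" where
  "upper_pairs F R x = {p\<in>R. x < fst p \<and> snd p \<in> compl_component F x}"

text \<open>For \<open>x \<notin> fst ` R\<close>, the images \<open>y\<close> that keep \<open>insert (x, y) R\<close> order compatible.\<close>

definition admissible_images :: "'a::linorder set \<Rightarrow> ('a \<times> 'a) set \<Rightarrow> 'a \<Rightarrow> 'a set" where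
  "admissible_images F R x = {y \<in> compl_component F x.
     (\<forall>p\<in>lower_pairs F R x. snd p < y) \<and> (\<forall>p\<in>upper_pairs F R x. y < snd p)}"

lemma finite_lower_pairs: "admissible F R \<Longrightarrow> finite (lower_pairs F R x)"
  unfolding admissible_def lower_pairs_def compl_component_def by (auto elim: finite_subset[rotated])

lemma finite_upper_pairs: "admissible F R \<Longrightarrow> finite (upper_pairs F R x)"
  unfolding admissible_def upper_pairs_def compl_component_def by (auto elim: finite_subset[rotated])

lemma lower_pairs_less_upper_pairs:
  "admissible F R \<Longrightarrow> p \<in> lower_pairs F R x \<Longrightarrow> q \<in> upper_pairs F R x \<Longrightarrow> snd p < snd q"
  unfolding admissible_def lower_pairs_def upper_pairs_def
  using order_compatibleD[of R "fst p" "snd p" "fst q" "snd q"] by auto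

definition nearest_lower :: "'a::linorder set \<Rightarrow> ('a \<times> 'a) set \<Rightarrow> 'a \<Rightarrow> 'a \<Rightarrow> 'a \<Rightarrow> bool" where
  "nearest_lower F R x xl yl \<longleftrightarrow> (xl, yl) \<in> lower_pairs F R x \<and> (\<forall>p\<in>lower_pairs F R x. snd p \<le> yl)"

definition nearest_upper :: "'a::linorder set \<Rightarrow> ('a \<times> 'a) set \<Rightarrow> 'a \<Rightarrow> 'a \<Rightarrow> 'a \<Rightarrow> bool" where
  "nearest_upper F R x xu yu \<longleftrightarrow> (xu, yu) \<in> upper_pairs F R x \<and> (\<forall>p\<in>upper_pairs F R x. yu \<le> snd p)"

lemma nearest_lower_unique: "nearest_lower F R x xl yl \<Longrightarrow> nearest_lower F R x xl' yl' \<Longrightarrow> yl' = yl"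
  unfolding nearest_lower_def by force

lemma nearest_upper_unique: "nearest_upper F R x xu yu \<Longrightarrow> nearest_upper F R x xu' yu' \<Longrightarrow> yu' = yu"
  unfolding nearest_upper_def by force

lemma lower_pairs_max:
  assumes "admissible F R" "lower_pairs F R x \<noteq> {}"
  obtains xl yl where "nearest_lower F R x xl yl"
proof -
  have "finite (snd ` lower_pairs F R x)" using finite_lower_pairs[OF assms(1)] by simp
  then have "Max (snd ` lower_pairs F R x) \<in> snd ` lower_pairs F R x"
    "\<forall>p\<in>lower_pairs F R x. snd p \<le> Max (snd ` lower_pairs F R x)"
    using assms(2) by auto
  then show ?thesis using that unfolding nearest_lower_def by force
qed

lemma upper_pairs_min:
  assumes "admissible F R" "upper_pairs F R x \<noteq> {}"
  obtains xu yu where "nearest_upper F R x xu yu"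
proof -
  have "finite (snd ` upper_pairs F R x)" using finite_upper_pairs[OF assms(1)] by simp
  then have "Min (snd ` upper_pairs F R x) \<in> snd ` upper_pairs F R x"
    "\<forall>p\<in>upper_pairs F R x. Min (snd ` upper_pairs F R x) \<le> snd p"
    using assms(2) by auto
  then show ?thesis using that unfolding nearest_upper_def by force
qed

lemma image_below_compl_component:
  assumes "admissible F R" "(x1, y1) \<in> R" "x1 < x" "y1 \<notin> compl_component F x"
    and "z \<in> compl_component F x"
  shows "y1 < z"
proof -
  have z: "\<forall>f\<in>F. f < x \<longleftrightarrow> f < z" using assms(5) unfolding compl_component_def by simp
  show ?thesis
  proof (cases "y1 \<in> F")
    case True
    then have "y1 < x" using admissible_fixes[OF assms(1,2)] assms(3) by auto
    then show ?thesis using z True by blast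
  next
    case False
    then obtain f where f: "f \<in> F" "\<not> (f < x \<longleftrightarrow> f < y1)"
      using assms(4) unfolding compl_component_def by auto
    moreover have "f < x1 \<longleftrightarrow> f < y1" using admissible_same_side[OF assms(1,2) \<open>f \<in> F\<close>] .
    ultimately have "f < x" "y1 \<le> f" using assms(3) by auto
    then show ?thesis using z f(1) by (meson le_less_trans)
  qed
qed

lemma image_above_compl_component:
  assumes "admissible F R" "(x1, y1) \<in> R" "x < x1" "y1 \<notin> compl_component F x"
    and "z \<in> compl_component F x"
  shows "z < y1"
proof -
  have z: "z \<notin> F" "\<forall>f\<in>F. f < x \<longleftrightarrow> f < z" using assms(5) unfolding compl_component_def by auto
  show ?thesis
  proof (cases "y1 \<in> F")
    case True
    then have "x < y1" using admissible_fixes[OF assms(1,2)] assms(3) by auto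
    then have "\<not> y1 < z" using z(2) True by auto
    moreover have "y1 \<noteq> z" using z(1) True by auto
    ultimately show ?thesis by simp
  next
    case False
    then obtain f where f: "f \<in> F" "\<not> (f < x \<longleftrightarrow> f < y1)"
      using assms(4) unfolding compl_component_def by auto
    moreover have "f < x1 \<longleftrightarrow> f < y1" using admissible_same_side[OF assms(1,2) \<open>f \<in> F\<close>] .
    ultimately have "\<not> f < x" "f < y1" using assms(3) by auto
    then show ?thesis using z f(1) by (meson not_less less_le_trans)
  qed
qed

lemma image_in_compl_component:
  assumes "admissible F R" "(x1, y1) \<in> R" "x1 \<in> compl_component F x"
  shows "y1 \<in> compl_component F x"
proof -
  have x1: "x1 \<notin> F" "\<forall>f\<in>F. f < x \<longleftrightarrow> f < x1" using assms(3) unfolding compl_component_def by auto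
  then have "y1 \<notin> F" using admissible_fixes[OF assms(1,2)] by auto
  moreover have "\<forall>f\<in>F. f < x \<longleftrightarrow> f < y1" using x1(2) admissible_same_side[OF assms(1,2)] by blast
  ultimately show ?thesis unfolding compl_component_def by simp
qed

lemma order_compatible_insert_image:
  assumes "admissible F R" "x \<notin> fst ` R" "y \<in> admissible_images F R x"
  shows "order_compatible (insert (x, y) R)"
proof (rule order_compatible_insert)
  show "order_compatible R" using assms(1) unfolding admissible_def by simp
  have y: "y \<in> compl_component F x" using assms(3) unfolding admissible_images_def by simp
  fix a b assume ab: "(a, b) \<in> R"
  have below: "b < y" if "a < x"
  proof (cases "b \<in> compl_component F x")
    case True
    then show ?thesis
      using assms(3) ab that unfolding admissible_images_def lower_pairs_def by auto
  qed (use image_below_compl_component[OF assms(1) ab that _ y] in auto)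
  have above: "y < b" if "x < a"
  proof (cases "b \<in> compl_component F x")
    case True
    then show ?thesis
      using assms(3) ab that unfolding admissible_images_def upper_pairs_def by auto
  qed (use image_above_compl_component[OF assms(1) ab that _ y] in auto)
  have "a \<noteq> x" using assms(2) ab by force
  show "(a < x \<longleftrightarrow> b < y) \<and> (x < a \<longleftrightarrow> y < b)"
  proof (cases "a < x")
    case True
    then show ?thesis using below by auto
  next
    case False
    then have "x < a" using \<open>a \<noteq> x\<close> by simp
    then show ?thesis using above by auto
  qed
qed

lemma order_compatible_insert_preimage:
  assumes "admissible F R" "y \<notin> snd ` R" "x \<in> admissible_images F (converse R) y"
  shows "order_compatible (insert (x, y) R)"
proof -
  have "y \<notin> fst ` converse R" using assms(2) by force
  then have "order_compatible (insert (y, x) (converse R))"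
    using order_compatible_insert_image[OF admissible_converse[OF assms(1)] _ assms(3)] by blast
  moreover have "insert (y, x) (converse R) = converse (insert (x, y) R)" by auto
  ultimately show ?thesis using order_compatible_converse by metis
qed

lemma finite_gap_above:
  fixes a e :: "'a::linordered_ab_group_add"
  assumes "finite S" "\<forall>s\<in>S. a < s" "e > 0"
  obtains \<eta> where "0 < \<eta>" "\<eta> \<le> e" "\<forall>s\<in>S. a + \<eta> \<le> s"
proof (cases "S = {}")
  case True
  then show ?thesis using that[of e] assms(3) by simp
next
  case False
  then have "Min S \<in> S" "\<forall>s\<in>S. Min S \<le> s" using assms(1) by auto
  moreover have "a + min e (Min S - a) \<le> Min S"
    using add_left_mono[OF min.cobounded2[of e "Min S - a"], of a] by simp
  ultimately show ?thesis using that[of "min e (Min S - a)"] assms(2,3) by force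
qed

lemma finite_gap_below:
  fixes a e :: "'a::linordered_ab_group_add"
  assumes "finite S" "\<forall>s\<in>S. s < a" "e > 0"
  obtains \<eta> where "0 < \<eta>" "\<eta> \<le> e" "\<forall>s\<in>S. s \<le> a - \<eta>"
proof (cases "S = {}")
  case True
  then show ?thesis using that[of e] assms(3) by simp
next
  case False
  then have "Max S \<in> S" "\<forall>s\<in>S. s \<le> Max S" using assms(1) by auto
  moreover have "Max S \<le> a - min e (a - Max S)"
    using diff_left_mono[OF min.cobounded2[of e "a - Max S"], of a] by simp
  ultimately show ?thesis using that[of "min e (a - Max S)"] assms(2,3) by force
qed

lemma admissible_images_above_lower:
  assumes "closed F" "admissible F R" "nearest_lower F R x xl yl"
  obtains \<eta> :: rat where "\<eta> > 0" "{yl<..<yl + \<eta>} \<subseteq> admissible_images F R x"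
proof -
  have pair: "(xl, yl) \<in> lower_pairs F R x" and max: "\<forall>p\<in>lower_pairs F R x. snd p \<le> yl"
    using assms(3) unfolding nearest_lower_def by auto
  then have "yl \<in> compl_component F x" unfolding lower_pairs_def by simp
  then obtain e where "e > 0" and e: "{yl - e<..<yl + e} \<subseteq> compl_component F x"
    by (rule compl_component_nbhd[OF assms(1)])
  have "yl < snd q" if "q \<in> upper_pairs F R x" for q
    using lower_pairs_less_upper_pairs[OF assms(2) pair that] by simp
  then have "\<forall>s\<in>snd ` upper_pairs F R x. yl < s" by blast
  moreover have "finite (snd ` upper_pairs F R x)" using finite_upper_pairs[OF assms(2)] by simp
  ultimately obtain \<eta> where "0 < \<eta>" "\<eta> \<le> e" and \<eta>: "\<forall>s\<in>snd ` upper_pairs F R x. yl + \<eta> \<le> s"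
    using finite_gap_above[OF _ _ \<open>e > 0\<close>] by metis
  have "z \<in> admissible_images F R x" if "yl < z" "z < yl + \<eta>" for z
  proof -
    have "z \<in> compl_component F x" using e that \<open>\<eta> \<le> e\<close> \<open>e > 0\<close> by auto
    moreover have "\<forall>p\<in>lower_pairs F R x. snd p < z" using max that(1) le_less_trans by blast
    moreover have "\<forall>p\<in>upper_pairs F R x. z < snd p" using \<eta> that(2) less_le_trans by blast
    ultimately show ?thesis unfolding admissible_images_def by simp
  qed
  then show ?thesis by (intro that[OF \<open>0 < \<eta>\<close>]) auto
qed

lemma admissible_images_below_upper:
  assumes "closed F" "admissible F R" "nearest_upper F R x xu yu"
  obtains \<eta> :: rat where "\<eta> > 0" "{yu - \<eta><..<yu} \<subseteq> admissible_images F R x"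
proof -
  have pair: "(xu, yu) \<in> upper_pairs F R x" and min: "\<forall>p\<in>upper_pairs F R x. yu \<le> snd p"
    using assms(3) unfolding nearest_upper_def by auto
  then have "yu \<in> compl_component F x" unfolding upper_pairs_def by simp
  then obtain e where "e > 0" and e: "{yu - e<..<yu + e} \<subseteq> compl_component F x"
    by (rule compl_component_nbhd[OF assms(1)])
  have "snd p < yu" if "p \<in> lower_pairs F R x" for p
    using lower_pairs_less_upper_pairs[OF assms(2) that pair] by simp
  then have "\<forall>s\<in>snd ` lower_pairs F R x. s < yu" by blast
  moreover have "finite (snd ` lower_pairs F R x)" using finite_lower_pairs[OF assms(2)] by simp
  ultimately obtain \<eta> where "0 < \<eta>" "\<eta> \<le> e" and \<eta>: "\<forall>s\<in>snd ` lower_pairs F R x. s \<le> yu - \<eta>"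
    using finite_gap_below[OF _ _ \<open>e > 0\<close>] by metis
  have "z \<in> admissible_images F R x" if "yu - \<eta> < z" "z < yu" for z
  proof -
    have "z \<in> compl_component F x" using e that \<open>\<eta> \<le> e\<close> \<open>e > 0\<close> by auto
    moreover have "\<forall>p\<in>upper_pairs F R x. z < snd p" using min that(2) less_le_trans by blast
    moreover have "\<forall>p\<in>lower_pairs F R x. snd p < z" using \<eta> that(1) le_less_trans by blast
    ultimately show ?thesis unfolding admissible_images_def by simp
  qed
  then show ?thesis by (intro that[OF \<open>0 < \<eta>\<close>]) auto
qed

lemma admissible_images_between:
  assumes "admissible F R" "nearest_lower F R x xl yl" "nearest_upper F R x xu yu"
  shows "yl < yu" "{yl<..<yu} \<subseteq> admissible_images F R x"
proof -
  have pairs: "(xl, yl) \<in> lower_pairs F R x" "(xu, yu) \<in> upper_pairs F R x"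
    using assms(2,3) unfolding nearest_lower_def nearest_upper_def by auto
  then show "yl < yu" using lower_pairs_less_upper_pairs[OF assms(1)] by fastforce
  have "yl \<in> compl_component F x" "yu \<in> compl_component F x"
    using pairs unfolding lower_pairs_def upper_pairs_def by auto
  then show "{yl<..<yu} \<subseteq> admissible_images F R x"
    using assms(2,3) compl_component_convex[of yl F x yu]
    unfolding admissible_images_def nearest_lower_def nearest_upper_def
    by (force simp: less_imp_le)
qed

lemma admissible_images_interval:
  assumes "closed F" "admissible F R" "x \<notin> F"
  obtains a b :: rat where "a < b" "{a<..<b} \<subseteq> admissible_images F R x"
proof (cases "lower_pairs F R x = {}")
  case False
  then obtain xl yl where "nearest_lower F R x xl yl" using lower_pairs_max[OF assms(2)] by blast
  then obtain \<eta> where "\<eta> > 0" "{yl<..<yl + \<eta>} \<subseteq> admissible_images F R x"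
    using admissible_images_above_lower[OF assms(1,2)] by blast
  then show ?thesis using that[of yl "yl + \<eta>"] by simp
next
  case lower: True
  show ?thesis
  proof (cases "upper_pairs F R x = {}")
    case False
    then obtain xu yu where "nearest_upper F R x xu yu" using upper_pairs_min[OF assms(2)] by blast
    then obtain \<eta> where "\<eta> > 0" "{yu - \<eta><..<yu} \<subseteq> admissible_images F R x"
      using admissible_images_below_upper[OF assms(1,2)] by blast
    then show ?thesis using that[of "yu - \<eta>" yu] by simp
  next
    case True
    obtain e where "e > 0" "{x - e<..<x + e} \<subseteq> compl_component F x"
      using compl_component_nbhd[OF assms(1) compl_component_self[OF assms(3)]] by blast
    then show ?thesis using that[of "x - e" "x + e"] lower True unfolding admissible_images_def by auto
  qed
qed

locale back_forth_frame =
  fixes F B C :: "rat set"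
  assumes closed_F: "closed F"
    and F_subset_B: "F \<subseteq> B"
    and B_two_sided: "\<And>x. x \<in> B \<Longrightarrow> two_sided_limit_point B x"
    and B_below: "\<And>x. x \<notin> F \<Longrightarrow> \<exists>k\<in>B. k < x \<and> {k..x} \<inter> F = {}"
    and B_above: "\<And>x. x \<notin> F \<Longrightarrow> \<exists>k\<in>B. x < k \<and> {x..k} \<inter> F = {}"
    and closed_C: "closed C"
    and nowhere_dense_C: "nowhere_dense C"
begin

lemma B_between: "a < b \<Longrightarrow> a \<in> B \<or> b \<in> B \<Longrightarrow> {a<..<b} \<inter> B \<noteq> {}"
  using B_two_sided unfolding two_sided_limit_point_def by fastforce

lemma gap_below_in_compl_component:
  assumes "x1 < x" "{x1<..<x} \<inter> B = {}"
  shows "x1 \<in> compl_component F x"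
proof -
  have "x1 \<notin> F" using B_between[OF assms(1)] assms(2) F_subset_B by blast
  moreover have "f < x \<longleftrightarrow> f < x1" if "f \<in> F" for f
  proof
    assume "f < x"
    moreover have "f \<notin> {x1<..<x}" using that assms(2) F_subset_B by blast
    ultimately show "f < x1" using \<open>x1 \<notin> F\<close> that by (cases "f = x1") auto
  qed (use assms(1) in simp)
  ultimately show ?thesis unfolding compl_component_def by simp
qed

lemma gap_above_in_compl_component:
  assumes "x \<notin> F" "x < x2" "{x<..<x2} \<inter> B = {}"
  shows "x2 \<in> compl_component F x"
proof -
  have "x2 \<notin> F" using B_between[OF assms(2)] assms(3) F_subset_B by blast
  moreover have "f < x \<longleftrightarrow> f < x2" if "f \<in> F" for f
  proof
    assume "f < x2"
    moreover have "f \<notin> {x<..<x2}" using that assms(3) F_subset_B by blast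
    ultimately show "f < x" using assms(1) that by (cases "f = x") auto
  qed (use assms(2) in simp)
  ultimately show ?thesis unfolding compl_component_def by simp
qed

text \<open>The invariant of the back-and-forth construction: points of \<open>C\<close> have preimages in \<open>B\<close>,
  and \<open>B\<close>-free gaps between arguments are mapped to \<open>C\<close>-free gaps.\<close>

definition good_partial_iso :: "(rat \<times> rat) set \<Rightarrow> bool" where
  "good_partial_iso R \<longleftrightarrow> admissible F R \<and> (\<forall>x y. (x, y) \<in> R \<longrightarrow> y \<in> C \<longrightarrow> x \<in> B) \<and>
     (\<forall>x1 y1 x2 y2. (x1, y1) \<in> R \<longrightarrow> (x2, y2) \<in> R \<longrightarrow> x1 < x2 \<longrightarrow>
        {x1<..<x2} \<inter> B = {} \<longrightarrow> {y1<..<y2} \<inter> C = {})"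

lemma good_partial_iso_admissible: "good_partial_iso R \<Longrightarrow> admissible F R"
  unfolding good_partial_iso_def by simp

lemma good_partial_iso_order:
  "good_partial_iso R \<Longrightarrow> (a, b) \<in> R \<Longrightarrow> (c, d) \<in> R \<Longrightarrow> a < c \<longleftrightarrow> b < d"
  unfolding good_partial_iso_def admissible_def using order_compatibleD by blast

lemma good_partial_iso_preimage: "good_partial_iso R \<Longrightarrow> (x, y) \<in> R \<Longrightarrow> y \<in> C \<Longrightarrow> x \<in> B"
  unfolding good_partial_iso_def by blast

lemma good_partial_iso_gap:
  "good_partial_iso R \<Longrightarrow> (x1, y1) \<in> R \<Longrightarrow> (x2, y2) \<in> R \<Longrightarrow> x1 < x2 \<Longrightarrow> {x1<..<x2} \<inter> B = {}
    \<Longrightarrow> {y1<..<y2} \<inter> C = {}"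
  unfolding good_partial_iso_def by blast

definition lower_gaps_ok :: "(rat \<times> rat) set \<Rightarrow> rat \<Rightarrow> rat \<Rightarrow> bool" where
  "lower_gaps_ok R x y \<longleftrightarrow>
     (\<forall>x1 y1. (x1, y1) \<in> R \<longrightarrow> x1 < x \<longrightarrow> {x1<..<x} \<inter> B = {} \<longrightarrow> {y1<..<y} \<inter> C = {})"

definition upper_gaps_ok :: "(rat \<times> rat) set \<Rightarrow> rat \<Rightarrow> rat \<Rightarrow> bool" where
  "upper_gaps_ok R x y \<longleftrightarrow>
     (\<forall>x2 y2. (x2, y2) \<in> R \<longrightarrow> x < x2 \<longrightarrow> {x<..<x2} \<inter> B = {} \<longrightarrow> {y<..<y2} \<inter> C = {})"

lemma good_partial_iso_insert:
  assumes "good_partial_iso R" "order_compatible (insert (x, y) R)" "y \<in> C \<longrightarrow> x \<in> B"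
    and "lower_gaps_ok R x y" "upper_gaps_ok R x y"
  shows "good_partial_iso (insert (x, y) R)"
proof -
  have "{y1<..<y2} \<inter> C = {}"
    if p1: "(x1, y1) \<in> insert (x, y) R" and p2: "(x2, y2) \<in> insert (x, y) R"
      and gap: "x1 < x2" "{x1<..<x2} \<inter> B = {}" for x1 y1 x2 y2
  proof (cases "(x1, y1) = (x, y)")
    case True
    then have "(x2, y2) \<in> R" using p2 gap(1) by auto
    then show ?thesis using assms(5) True gap unfolding upper_gaps_ok_def by blast
  next
    case False
    then have "(x1, y1) \<in> R" using p1 by blast
    then show ?thesis
      using p2 gap assms(4) good_partial_iso_gap[OF assms(1)] unfolding lower_gaps_ok_def by blast
  qed
  moreover have "admissible F (insert (x, y) R)"
    using admissible_insert[OF good_partial_iso_admissible[OF assms(1)] assms(2)] .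
  ultimately show ?thesis using assms(1,3) unfolding good_partial_iso_def by blast
qed

lemma gaps_ok_if_mem_B:
  assumes "x \<in> B"
  shows "lower_gaps_ok R x y" "upper_gaps_ok R x y"
  using B_between assms unfolding lower_gaps_ok_def upper_gaps_ok_def by blast+

lemma good_partial_iso_Id_on: "good_partial_iso (Id_on F)"
proof -
  have "order_compatible (Id_on F)" unfolding order_compatible_def by auto
  moreover have "finite {p\<in>Id_on F. snd p \<notin> F}" by (rule finite_subset[of _ "{}"]) auto
  ultimately have "admissible F (Id_on F)" unfolding admissible_def by auto
  moreover have "{x1<..<x2} \<inter> B \<noteq> {}" if "x1 \<in> F" "x1 < x2" for x1 x2
    using B_between that F_subset_B by blast
  ultimately show ?thesis unfolding good_partial_iso_def using F_subset_B by auto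
qed

lemma lower_gaps_ok_from_nearest:
  assumes iso: "good_partial_iso R"
    and nearest: "\<And>xl yl. nearest_lower F R x xl yl \<Longrightarrow> {xl<..<x} \<inter> B = {} \<Longrightarrow> {yl<..<y} \<inter> C = {}"
  shows "lower_gaps_ok R x y"
  unfolding lower_gaps_ok_def
proof (intro allI impI)
  fix x1 y1 assume p: "(x1, y1) \<in> R" and "x1 < x" and gap: "{x1<..<x} \<inter> B = {}"
  have adm: "admissible F R" using good_partial_iso_admissible[OF iso] .
  then have ord: "order_compatible R" unfolding admissible_def by simp
  have "y1 \<in> compl_component F x"
    using image_in_compl_component[OF adm p gap_below_in_compl_component[OF \<open>x1 < x\<close> gap]] .
  then have low: "(x1, y1) \<in> lower_pairs F R x" using p \<open>x1 < x\<close> unfolding lower_pairs_def by simp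
  then obtain xl yl where near: "nearest_lower F R x xl yl" using lower_pairs_max[OF adm] by blast
  then have pl: "(xl, yl) \<in> R" "xl < x" "y1 \<le> yl"
    using low unfolding nearest_lower_def lower_pairs_def by force+
  then have "x1 \<le> xl" using order_compatibleD[OF ord pl(1) p] by (simp add: not_less)
  then have "{xl<..<x} \<subseteq> {x1<..<x}" by auto
  then have gap_l: "{xl<..<x} \<inter> B = {}" using gap by blast
  then have "xl \<notin> B" using B_between[OF pl(2)] by blast
  then have "yl \<notin> C" using good_partial_iso_preimage[OF iso pl(1)] by blast
  moreover have "{y1<..<yl} \<inter> C = {}"
  proof (cases "x1 < xl")
    case True
    have "{x1<..<xl} \<subseteq> {x1<..<x}" using pl(2) by auto
    then have "{x1<..<xl} \<inter> B = {}" using gap by blast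
    then show ?thesis using good_partial_iso_gap[OF iso p pl(1) True] by blast
  next
    case False
    then have "y1 = yl" using \<open>x1 \<le> xl\<close> order_compatible_eq[OF ord p pl(1)] by simp
    then show ?thesis by simp
  qed
  moreover have "{yl<..<y} \<inter> C = {}" using nearest[OF near gap_l] .
  moreover have "{y1<..<y} \<subseteq> {y1<..<yl} \<union> {yl} \<union> {yl<..<y}" using pl(3) by auto
  ultimately show "{y1<..<y} \<inter> C = {}" by blast
qed

lemma upper_gaps_ok_from_nearest:
  assumes iso: "good_partial_iso R" and "x \<notin> F"
    and nearest: "\<And>xu yu. nearest_upper F R x xu yu \<Longrightarrow> {x<..<xu} \<inter> B = {} \<Longrightarrow> {y<..<yu} \<inter> C = {}"
  shows "upper_gaps_ok R x y"
  unfolding upper_gaps_ok_def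
proof (intro allI impI)
  fix x2 y2 assume p: "(x2, y2) \<in> R" and "x < x2" and gap: "{x<..<x2} \<inter> B = {}"
  have adm: "admissible F R" using good_partial_iso_admissible[OF iso] .
  then have ord: "order_compatible R" unfolding admissible_def by simp
  have "y2 \<in> compl_component F x"
    using image_in_compl_component[OF adm p gap_above_in_compl_component[OF \<open>x \<notin> F\<close> \<open>x < x2\<close> gap]] .
  then have up: "(x2, y2) \<in> upper_pairs F R x" using p \<open>x < x2\<close> unfolding upper_pairs_def by simp
  then obtain xu yu where near: "nearest_upper F R x xu yu" using upper_pairs_min[OF adm] by blast
  then have pu: "(xu, yu) \<in> R" "x < xu" "yu \<le> y2"
    using up unfolding nearest_upper_def upper_pairs_def by force+
  then have "xu \<le> x2" using order_compatibleD[OF ord p pu(1)] by (simp add: not_less)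
  then have "{x<..<xu} \<subseteq> {x<..<x2}" by auto
  then have gap_u: "{x<..<xu} \<inter> B = {}" using gap by blast
  then have "xu \<notin> B" using B_between[OF pu(2)] by blast
  then have "yu \<notin> C" using good_partial_iso_preimage[OF iso pu(1)] by blast
  moreover have "{yu<..<y2} \<inter> C = {}"
  proof (cases "xu < x2")
    case True
    have "{xu<..<x2} \<subseteq> {x<..<x2}" using pu(2) by auto
    then have "{xu<..<x2} \<inter> B = {}" using gap by blast
    then show ?thesis using good_partial_iso_gap[OF iso pu(1) p True] by blast
  next
    case False
    then have "y2 = yu" using \<open>xu \<le> x2\<close> order_compatible_eq[OF ord p pu(1)] by simp
    then show ?thesis by simp
  qed
  moreover have "{y<..<yu} \<inter> C = {}" using nearest[OF near gap_u] .
  moreover have "{y<..<y2} \<subseteq> {y<..<yu} \<union> {yu} \<union> {yu<..<y2}" using pu(3) by auto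
  ultimately show "{y<..<y2} \<inter> C = {}" by blast
qed

lemma C_free_between_nearest:
  assumes iso: "good_partial_iso R" and "x \<notin> B"
    and near: "nearest_lower F R x xl yl" "nearest_upper F R x xu yu"
    and gaps: "{xl<..<x} \<inter> B = {}" "{x<..<xu} \<inter> B = {}"
  shows "yl < yu" "{yl<..<yu} \<subseteq> admissible_images F R x" "{yl<..<yu} \<inter> C = {}"
proof -
  have adm: "admissible F R" using good_partial_iso_admissible[OF iso] .
  show "yl < yu" "{yl<..<yu} \<subseteq> admissible_images F R x"
    using admissible_images_between[OF adm near] by auto
  have pairs: "(xl, yl) \<in> R" "xl < x" "(xu, yu) \<in> R" "x < xu"
    using near unfolding nearest_lower_def nearest_upper_def lower_pairs_def upper_pairs_def by auto
  have "{xl<..<xu} \<subseteq> {xl<..<x} \<union> {x} \<union> {x<..<xu}" by auto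
  then have "{xl<..<xu} \<inter> B = {}" using gaps \<open>x \<notin> B\<close> by blast
  then show "{yl<..<yu} \<inter> C = {}"
    using good_partial_iso_gap[OF iso pairs(1) pairs(3)] pairs(2,4) by simp
qed

lemma C_free_above_nearest_lower:
  assumes iso: "good_partial_iso R" and near: "nearest_lower F R x xl yl" and gap: "{xl<..<x} \<inter> B = {}"
  obtains \<eta> where "\<eta> > 0" "{yl<..<yl + \<eta>} \<subseteq> admissible_images F R x" "{yl<..<yl + \<eta>} \<inter> C = {}"
proof -
  have adm: "admissible F R" using good_partial_iso_admissible[OF iso] .
  have pair: "(xl, yl) \<in> R" "xl < x" using near unfolding nearest_lower_def lower_pairs_def by auto
  then have "yl \<notin> C" using B_between[OF pair(2)] gap good_partial_iso_preimage[OF iso pair(1)] by blast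
  then obtain e where "e > 0" and e: "{yl - e<..<yl + e} \<inter> C = {}"
    using closed_rat_avoids_interval[OF closed_C] by blast
  obtain \<eta> where "\<eta> > 0" and \<eta>: "{yl<..<yl + \<eta>} \<subseteq> admissible_images F R x"
    using admissible_images_above_lower[OF closed_F adm near] by blast
  show ?thesis
  proof (rule that)
    show "min e \<eta> > 0" using \<open>e > 0\<close> \<open>\<eta> > 0\<close> by simp
    have "{yl<..<yl + min e \<eta>} \<subseteq> {yl<..<yl + \<eta>}" by auto
    then show "{yl<..<yl + min e \<eta>} \<subseteq> admissible_images F R x" using \<eta> by blast
    have "{yl<..<yl + min e \<eta>} \<subseteq> {yl - e<..<yl + e}" using \<open>e > 0\<close> by auto
    then show "{yl<..<yl + min e \<eta>} \<inter> C = {}" using e by blast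
  qed
qed

lemma C_free_below_nearest_upper:
  assumes iso: "good_partial_iso R" and near: "nearest_upper F R x xu yu" and gap: "{x<..<xu} \<inter> B = {}"
  obtains \<eta> where "\<eta> > 0" "{yu - \<eta><..<yu} \<subseteq> admissible_images F R x" "{yu - \<eta><..<yu} \<inter> C = {}"
proof -
  have adm: "admissible F R" using good_partial_iso_admissible[OF iso] .
  have pair: "(xu, yu) \<in> R" "x < xu" using near unfolding nearest_upper_def upper_pairs_def by auto
  then have "yu \<notin> C" using B_between[OF pair(2)] gap good_partial_iso_preimage[OF iso pair(1)] by blast
  then obtain e where "e > 0" and e: "{yu - e<..<yu + e} \<inter> C = {}"
    using closed_rat_avoids_interval[OF closed_C] by blast
  obtain \<eta> where "\<eta> > 0" and \<eta>: "{yu - \<eta><..<yu} \<subseteq> admissible_images F R x"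
    using admissible_images_below_upper[OF closed_F adm near] by blast
  show ?thesis
  proof (rule that)
    show "min e \<eta> > 0" using \<open>e > 0\<close> \<open>\<eta> > 0\<close> by simp
    have "{yu - min e \<eta><..<yu} \<subseteq> {yu - \<eta><..<yu}" by auto
    then show "{yu - min e \<eta><..<yu} \<subseteq> admissible_images F R x" using \<eta> by blast
    have "{yu - min e \<eta><..<yu} \<subseteq> {yu - e<..<yu + e}" using \<open>e > 0\<close> by auto
    then show "{yu - min e \<eta><..<yu} \<inter> C = {}" using e by blast
  qed
qed

lemma C_free_images_lower_gap:
  assumes iso: "good_partial_iso R" and "x \<notin> B"
    and lower: "nearest_lower F R x xl yl" "{xl<..<x} \<inter> B = {}"
  obtains b where "yl < b" "{yl<..<b} \<subseteq> admissible_images F R x" "{yl<..<b} \<inter> C = {}"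
    "\<And>xu yu. nearest_upper F R x xu yu \<Longrightarrow> {x<..<xu} \<inter> B = {} \<Longrightarrow> b = yu"
proof (cases "\<exists>xu yu. nearest_upper F R x xu yu \<and> {x<..<xu} \<inter> B = {}")
  case True
  then obtain xu yu where upper: "nearest_upper F R x xu yu" "{x<..<xu} \<inter> B = {}" by blast
  show ?thesis
  proof (rule that)
    show "yl < yu" "{yl<..<yu} \<subseteq> admissible_images F R x" "{yl<..<yu} \<inter> C = {}"
      using C_free_between_nearest[OF iso \<open>x \<notin> B\<close> lower(1) upper(1) lower(2) upper(2)] by auto
    show "yu = yu'" if "nearest_upper F R x xu' yu'" "{x<..<xu'} \<inter> B = {}" for xu' yu'
      using nearest_upper_unique[OF upper(1) that(1)] by simp
  qed
next
  case False
  obtain \<eta> where "\<eta> > 0" "{yl<..<yl + \<eta>} \<subseteq> admissible_images F R x" "{yl<..<yl + \<eta>} \<inter> C = {}"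
    using C_free_above_nearest_lower[OF iso lower] by blast
  moreover have "yl + \<eta> = yu" if "nearest_upper F R x xu yu" "{x<..<xu} \<inter> B = {}" for xu yu
    using False that by blast
  ultimately show ?thesis using that[of "yl + \<eta>"] by simp
qed

lemma C_free_images_no_lower_gap:
  assumes iso: "good_partial_iso R" and "x \<notin> F"
  obtains a b where "a < b" "{a<..<b} \<subseteq> admissible_images F R x" "{a<..<b} \<inter> C = {}"
    "\<And>xu yu. nearest_upper F R x xu yu \<Longrightarrow> {x<..<xu} \<inter> B = {} \<Longrightarrow> b = yu"
proof (cases "\<exists>xu yu. nearest_upper F R x xu yu \<and> {x<..<xu} \<inter> B = {}")
  case True
  then obtain xu yu where upper: "nearest_upper F R x xu yu" "{x<..<xu} \<inter> B = {}" by blast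
  obtain \<eta> where "\<eta> > 0" "{yu - \<eta><..<yu} \<subseteq> admissible_images F R x" "{yu - \<eta><..<yu} \<inter> C = {}"
    using C_free_below_nearest_upper[OF iso upper] by blast
  moreover have "yu = yu'" if "nearest_upper F R x xu' yu'" "{x<..<xu'} \<inter> B = {}" for xu' yu'
    using nearest_upper_unique[OF upper(1) that(1)] by simp
  ultimately show ?thesis using that[of "yu - \<eta>" yu] by simp
next
  case False
  obtain a b where "a < b" "{a<..<b} \<subseteq> admissible_images F R x"
    using admissible_images_interval[OF closed_F good_partial_iso_admissible[OF iso] \<open>x \<notin> F\<close>] by blast
  moreover obtain p q where "a \<le> p" "p < q" "q \<le> b" "{p<..<q} \<inter> C = {}"
    using nowhere_dense_rat_gap[OF nowhere_dense_C \<open>a < b\<close>] by blast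
  moreover have "q = yu" if "nearest_upper F R x xu yu" "{x<..<xu} \<inter> B = {}" for xu yu
    using False that by blast
  ultimately show ?thesis using that[of p q] by force
qed

lemma C_free_images:
  assumes iso: "good_partial_iso R" and "x \<notin> F" "x \<notin> B"
  obtains a b where "a < b" "{a<..<b} \<subseteq> admissible_images F R x" "{a<..<b} \<inter> C = {}"
    "\<And>xl yl. nearest_lower F R x xl yl \<Longrightarrow> {xl<..<x} \<inter> B = {} \<Longrightarrow> a = yl"
    "\<And>xu yu. nearest_upper F R x xu yu \<Longrightarrow> {x<..<xu} \<inter> B = {} \<Longrightarrow> b = yu"
proof (cases "\<exists>xl yl. nearest_lower F R x xl yl \<and> {xl<..<x} \<inter> B = {}")
  case True
  then obtain xl yl where lower: "nearest_lower F R x xl yl" "{xl<..<x} \<inter> B = {}" by blast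
  obtain b where b: "yl < b" "{yl<..<b} \<subseteq> admissible_images F R x" "{yl<..<b} \<inter> C = {}"
    and upper: "\<And>xu yu. nearest_upper F R x xu yu \<Longrightarrow> {x<..<xu} \<inter> B = {} \<Longrightarrow> b = yu"
    using C_free_images_lower_gap[OF iso \<open>x \<notin> B\<close> lower] by blast
  show ?thesis
  proof (rule that[OF b _ upper])
    show "yl = yl'" if "nearest_lower F R x xl' yl'" "{xl'<..<x} \<inter> B = {}" for xl' yl'
      using nearest_lower_unique[OF lower(1) that(1)] by simp
  qed
next
  case False
  obtain a b where ab: "a < b" "{a<..<b} \<subseteq> admissible_images F R x" "{a<..<b} \<inter> C = {}"
    and upper: "\<And>xu yu. nearest_upper F R x xu yu \<Longrightarrow> {x<..<xu} \<inter> B = {} \<Longrightarrow> b = yu"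
    using C_free_images_no_lower_gap[OF iso \<open>x \<notin> F\<close>] by blast
  show ?thesis
  proof (rule that[OF ab _ upper])
    show "a = yl" if "nearest_lower F R x xl yl" "{xl<..<x} \<inter> B = {}" for xl yl
      using False that by blast
  qed
qed

lemma forth_image:
  assumes iso: "good_partial_iso R" and "x \<notin> F"
  obtains y where "y \<in> admissible_images F R x" "y \<in> C \<longrightarrow> x \<in> B"
    "lower_gaps_ok R x y" "upper_gaps_ok R x y"
proof (cases "x \<in> B")
  case True
  obtain a b where "a < b" "{a<..<b} \<subseteq> admissible_images F R x"
    using admissible_images_interval[OF closed_F good_partial_iso_admissible[OF iso] \<open>x \<notin> F\<close>] by blast
  then obtain y where "y \<in> admissible_images F R x" using dense by fastforce
  then show ?thesis using that gaps_ok_if_mem_B[OF True] True by blast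
next
  case False
  obtain a b where ab: "a < b" "{a<..<b} \<subseteq> admissible_images F R x" "{a<..<b} \<inter> C = {}"
    and lower: "\<And>xl yl. nearest_lower F R x xl yl \<Longrightarrow> {xl<..<x} \<inter> B = {} \<Longrightarrow> a = yl"
    and upper: "\<And>xu yu. nearest_upper F R x xu yu \<Longrightarrow> {x<..<xu} \<inter> B = {} \<Longrightarrow> b = yu"
    using C_free_images[OF iso \<open>x \<notin> F\<close> False] by blast
  obtain y where y: "a < y" "y < b" using dense[OF \<open>a < b\<close>] by blast
  show ?thesis
  proof (rule that)
    show "y \<in> admissible_images F R x" "y \<in> C \<longrightarrow> x \<in> B" using ab y by auto
    show "lower_gaps_ok R x y"
    proof (rule lower_gaps_ok_from_nearest[OF iso])
      fix xl yl assume "nearest_lower F R x xl yl" "{xl<..<x} \<inter> B = {}"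
      then have "a = yl" by (rule lower)
      moreover have "{a<..<y} \<subseteq> {a<..<b}" using y by auto
      ultimately show "{yl<..<y} \<inter> C = {}" using ab(3) by blast
    qed
    show "upper_gaps_ok R x y"
    proof (rule upper_gaps_ok_from_nearest[OF iso \<open>x \<notin> F\<close>])
      fix xu yu assume "nearest_upper F R x xu yu" "{x<..<xu} \<inter> B = {}"
      then have "b = yu" by (rule upper)
      moreover have "{y<..<b} \<subseteq> {a<..<b}" using y by auto
      ultimately show "{y<..<yu} \<inter> C = {}" using ab(3) by blast
    qed
  qed
qed

lemma forth_step:
  assumes iso: "good_partial_iso R"
  shows "\<exists>y. good_partial_iso (insert (x, y) R)"
proof (cases "x \<in> fst ` R")
  case True
  then obtain y where "(x, y) \<in> R" by force
  then show ?thesis using iso by (metis insert_absorb)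
next
  case False
  have adm: "admissible F R" using good_partial_iso_admissible[OF iso] .
  then have "x \<notin> F" using False unfolding admissible_def by force
  then obtain y where "y \<in> admissible_images F R x" "y \<in> C \<longrightarrow> x \<in> B"
    "lower_gaps_ok R x y" "upper_gaps_ok R x y"
    by (rule forth_image[OF iso])
  then show ?thesis
    using good_partial_iso_insert[OF iso order_compatible_insert_image[OF adm False]] by blast
qed

lemma preimage_pairs_both_sides:
  assumes iso: "good_partial_iso R" and "y \<notin> F"
    and avoid: "admissible_images F (converse R) y \<inter> B = {}"
  shows "lower_pairs F (converse R) y \<noteq> {}" "upper_pairs F (converse R) y \<noteq> {}"
proof -
  have adm: "admissible F (converse R)"
    using admissible_converse[OF good_partial_iso_admissible[OF iso]] .
  obtain a b where "a < b" "{a<..<b} \<subseteq> admissible_images F (converse R) y"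
    using admissible_images_interval[OF closed_F adm \<open>y \<notin> F\<close>] by blast
  then obtain y0 where y0: "y0 \<in> admissible_images F (converse R) y" using dense by fastforce
  then have comp: "y0 \<in> compl_component F y" unfolding admissible_images_def by simp
  then have "y0 \<notin> F" unfolding compl_component_def by simp
  show "lower_pairs F (converse R) y \<noteq> {}"
  proof
    assume empty: "lower_pairs F (converse R) y = {}"
    obtain k where "k \<in> B" "k < y0" "{k..y0} \<inter> F = {}" using B_below[OF \<open>y0 \<notin> F\<close>] by blast
    then have "k \<in> compl_component F y" using compl_component_extend[OF comp, of k] by simp
    moreover have "\<forall>p\<in>upper_pairs F (converse R) y. k < snd p"
      using y0 \<open>k < y0\<close> unfolding admissible_images_def by force
    ultimately have "k \<in> admissible_images F (converse R) y" using empty unfolding admissible_images_def by simp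
    then show False using \<open>k \<in> B\<close> avoid by blast
  qed
  show "upper_pairs F (converse R) y \<noteq> {}"
  proof
    assume empty: "upper_pairs F (converse R) y = {}"
    obtain k where "k \<in> B" "y0 < k" "{y0..k} \<inter> F = {}" using B_above[OF \<open>y0 \<notin> F\<close>] by blast
    then have "k \<in> compl_component F y" using compl_component_extend[OF comp, of k] by simp
    moreover have "\<forall>p\<in>lower_pairs F (converse R) y. snd p < k"
      using y0 \<open>y0 < k\<close> unfolding admissible_images_def by force
    ultimately have "k \<in> admissible_images F (converse R) y" using empty unfolding admissible_images_def by simp
    then show False using \<open>k \<in> B\<close> avoid by blast
  qed
qed

lemma gaps_ok_inside_free_interval:
  assumes iso: "good_partial_iso R"
    and pairs: "(xl, yl) \<in> R" "(xu, yu) \<in> R" and free: "{xl<..<xu} \<inter> B = {}"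
    and x: "xl < x" "x < xu" and y: "yl < y" "y < yu"
  shows "lower_gaps_ok R x y" "upper_gaps_ok R x y"
proof -
  have "x \<notin> B" using free x by auto
  show "lower_gaps_ok R x y"
    unfolding lower_gaps_ok_def
  proof (intro allI impI)
    fix x1 y1 assume p: "(x1, y1) \<in> R" "x1 < x" "{x1<..<x} \<inter> B = {}"
    have "{x1<..<xu} \<subseteq> {x1<..<x} \<union> {x} \<union> {xl<..<xu}" using x by auto
    then have "{x1<..<xu} \<inter> B = {}" using p(3) free \<open>x \<notin> B\<close> by blast
    then have "{y1<..<yu} \<inter> C = {}" using good_partial_iso_gap[OF iso p(1) pairs(2)] p(2) x(2) by simp
    moreover have "{y1<..<y} \<subseteq> {y1<..<yu}" using y(2) by auto
    ultimately show "{y1<..<y} \<inter> C = {}" by blast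
  qed
  show "upper_gaps_ok R x y"
    unfolding upper_gaps_ok_def
  proof (intro allI impI)
    fix x2 y2 assume p: "(x2, y2) \<in> R" "x < x2" "{x<..<x2} \<inter> B = {}"
    have "{xl<..<x2} \<subseteq> {xl<..<xu} \<union> {x} \<union> {x<..<x2}" using x by auto
    then have "{xl<..<x2} \<inter> B = {}" using p(3) free \<open>x \<notin> B\<close> by blast
    then have "{yl<..<y2} \<inter> C = {}" using good_partial_iso_gap[OF iso pairs(1) p(1)] p(2) x(1) by simp
    moreover have "{y<..<y2} \<subseteq> {yl<..<y2}" using y(1) by auto
    ultimately show "{y<..<y2} \<inter> C = {}" by blast
  qed
qed

lemma preimage_outside_B:
  assumes iso: "good_partial_iso R" and "y \<notin> F"
    and avoid: "admissible_images F (converse R) y \<inter> B = {}"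
  obtains x where "x \<in> admissible_images F (converse R) y" "y \<notin> C"
    "lower_gaps_ok R x y" "upper_gaps_ok R x y"
proof -
  have adm: "admissible F (converse R)"
    using admissible_converse[OF good_partial_iso_admissible[OF iso]] .
  obtain yl xl yu xu where near: "nearest_lower F (converse R) y yl xl" "nearest_upper F (converse R) y yu xu"
    using lower_pairs_max[OF adm] upper_pairs_min[OF adm] preimage_pairs_both_sides[OF assms] by metis
  have between: "xl < xu" "{xl<..<xu} \<subseteq> admissible_images F (converse R) y"
    using admissible_images_between[OF adm near] by auto
  then have free: "{xl<..<xu} \<inter> B = {}" using avoid by blast
  have pairs: "(xl, yl) \<in> R" "yl < y" "(xu, yu) \<in> R" "y < yu"
    using near unfolding nearest_lower_def nearest_upper_def lower_pairs_def upper_pairs_def by auto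
  have "{yl<..<yu} \<inter> C = {}" using good_partial_iso_gap[OF iso pairs(1,3) \<open>xl < xu\<close> free] .
  then have "y \<notin> C" using pairs(2,4) by auto
  obtain x where x: "xl < x" "x < xu" using dense[OF \<open>xl < xu\<close>] by blast
  moreover from x have "x \<in> admissible_images F (converse R) y" using between(2) by auto
  ultimately show ?thesis
    using that \<open>y \<notin> C\<close> gaps_ok_inside_free_interval[OF iso pairs(1,3) free x pairs(2,4)] by blast
qed

lemma back_step:
  assumes iso: "good_partial_iso R"
  shows "\<exists>x. good_partial_iso (insert (x, y) R)"
proof (cases "y \<in> snd ` R")
  case True
  then obtain x where "(x, y) \<in> R" by force
  then show ?thesis using iso by (metis insert_absorb)
next
  case False
  have adm: "admissible F R" using good_partial_iso_admissible[OF iso] .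
  then have "y \<notin> F" using False unfolding admissible_def by force
  obtain x where x: "x \<in> admissible_images F (converse R) y" "y \<in> C \<longrightarrow> x \<in> B"
    "lower_gaps_ok R x y" "upper_gaps_ok R x y"
  proof (cases "admissible_images F (converse R) y \<inter> B = {}")
    case True
    then show ?thesis using preimage_outside_B[OF iso \<open>y \<notin> F\<close>] that by blast
  next
    case False
    then obtain x where "x \<in> admissible_images F (converse R) y" "x \<in> B" by blast
    then show ?thesis using that gaps_ok_if_mem_B by blast
  qed
  then show ?thesis
    using good_partial_iso_insert[OF iso order_compatible_insert_preimage[OF adm False x(1)]] by blast
qed

theorem exists_automorphism:
  obtains f where "f \<in> order_automorphisms_rat" "\<And>x. x \<in> F \<Longrightarrow> f x = x" "C \<subseteq> f ` B"
proof -
  obtain f where f: "bij f" "\<And>x y. x \<le> y \<longleftrightarrow> f x \<le> f y"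
    and graph: "\<And>x. \<exists>R. good_partial_iso R \<and> (x, f x) \<in> R"
  proof (rule back_and_forth[of good_partial_iso "Id_on F"])
    show "good_partial_iso (Id_on F)" by (rule good_partial_iso_Id_on)
    show "\<exists>y. good_partial_iso (insert (x, y) R)" if "good_partial_iso R" for R x
      using forth_step[OF that] .
    show "\<exists>x. good_partial_iso (insert (x, y) R)" if "good_partial_iso R" for R y
      using back_step[OF that] .
    show "a < c \<longleftrightarrow> b < d" if "good_partial_iso R" "(a, b) \<in> R" "(c, d) \<in> R" for R a b c d
      using good_partial_iso_order[OF that] .
  qed blast
  have "f \<in> order_automorphisms_rat" unfolding order_automorphisms_rat_def using f by blast
  moreover have "f x = x" if "x \<in> F" for x
    using graph[of x] admissible_fixes good_partial_iso_admissible that by metis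
  moreover have "C \<subseteq> f ` B"
  proof
    fix z assume "z \<in> C"
    obtain x where "z = f x" using \<open>bij f\<close> by (metis bij_pointE)
    then show "z \<in> f ` B" using graph[of x] good_partial_iso_preimage \<open>z \<in> C\<close> by blast
  qed
  ultimately show ?thesis using that by blast
qed

end

lemma back_forth_frame_cantor_fill:
  assumes "closed F" "closed C" "nowhere_dense C"
  shows "back_forth_frame F (F \<union> cantor_fill F) C"
proof
  fix x assume "x \<notin> F"
  show "\<exists>k\<in>F \<union> cantor_fill F. k < x \<and> {k..x} \<inter> F = {}"
    using cantor_fill_below[OF assms(1) \<open>x \<notin> F\<close>] by blast
  show "\<exists>k\<in>F \<union> cantor_fill F. x < k \<and> {x..k} \<inter> F = {}"
    using cantor_fill_above[OF assms(1) \<open>x \<notin> F\<close>] by blast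
qed (use assms two_sided_limit_Un_cantor_fill in auto)

theorem mainTheorem5:
  shows "has_cofinal_orbits order_automorphisms_rat {A :: rat set. nowhere_dense A}"
  unfolding has_cofinal_orbits_def is_large_def
proof (intro ballI)
  fix a :: "rat set" assume "a \<in> {A. nowhere_dense A}"
  then have F: "closed (closure a)" "nowhere_dense (closure a)" by (simp_all add: nowhere_dense_closure)
  define B where "B = closure a \<union> cantor_fill (closure a)"
  have "nowhere_dense B" unfolding B_def using nowhere_dense_Un_cantor_fill F by blast
  moreover have "\<exists>\<gamma>\<in>pstab order_automorphisms_rat a. c \<subseteq> \<gamma> ` B" if "nowhere_dense c" for c
  proof -
    interpret back_forth_frame "closure a" B "closure c"
      unfolding B_def using back_forth_frame_cantor_fill F(1) that by (simp add: nowhere_dense_closure)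
    obtain f where "f \<in> order_automorphisms_rat" "\<And>x. x \<in> closure a \<Longrightarrow> f x = x" "closure c \<subseteq> f ` B"
      using exists_automorphism by blast
    then show ?thesis unfolding pstab_def using closure_subset by blast
  qed
  ultimately show "\<exists>b\<in>{A. nowhere_dense A}. \<forall>c\<in>{A. nowhere_dense A}.
      \<exists>\<gamma>\<in>pstab order_automorphisms_rat a. c \<subseteq> \<gamma> ` b" by blast
qed

end
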